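(* Let $T=(T_1,\dots,T_N)$ be an $N$-tuple of $1$-currents in $\mathbb{R}^n$ with locally finite joint mass such that \[ \sum_{k=1}^N\int_\Omega\vec T_k\cdot D_{\vec T_k}\psi\,d\|T\|=0\quad\text{for all }\psi\in C^\infty_0(\Omega;\mathbb{R}^n). \] Let $w\in W^{1,\infty}_0(\Omega;\mathbb{R}^N)$. If the local $L^2$-representative of $Dw$ with respect to $\|T\|\llcorner\Omega$ exists and equals $0$, then $w=0$ on $\operatorname{supp}T$ (here $w$ is the continuous representative, extended by $0$ to $\partial\Omega$).
   Context: $\Omega\subseteq\mathbb{R}^n$ is a bounded domain with smooth boundary. $\mathcal{D}^1(\mathbb{R}^n)$ is the space of smooth compactly supported $1$-forms; a $1$-current is a continuous linear functional on it. An $N$-tuple $T$ of $1$-currents has locally finite joint mass if for every compact $K$, $\sup\{\sum_kT_k(\omega_k):\operatorname{supp}\omega_k\subseteq K,\ \sup\sum_k|\omega_k|^2\le1\}<\infty$; then $T_k(\omega)=\int\omega(\vec T_k)\,d\|T\|$ for a unique Radon measure $\|T\|$ and $\|T\|$-measurable vector fields $\vec T_k\colon\mathbb{R}^n\to\mathbb{R}^n$ with $\sum_k|\vec T_k|^2=1$ $\|T\|$-a.e. $D_v\psi=(D\psi)v$ denotes the directional derivative. $\operatorname{supp}T$ is the complement of the largest open set on which all $T_k$ vanish. Local $L^2$-representative: for a Radon measure $\mu$ on $\Omega$ and $f\in L^1_{\mathrm{loc}}(\Omega;\mathbb{R}^{N\times n})$, $g\in L^2_{\mathrm{loc}}(\mu)$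 is the local $L^2$-representative of $f$ w.r.t. $\mu$ if for every compact $K\subset\Omega$ and every $\eta\in C^\infty_0(\mathbb{R}^n)$ with $\int\eta=1$, with $\eta_\epsilon(x)=\epsilon^{-n}\eta(x/\epsilon)$, $\lim_{\epsilon\searrow0}\int_K|g-\eta_\epsilon*f|^2d\mu=0$. *)

theory Defs
  imports "HOL-Analysis.Analysis"
begin

definition pderiv_at :: "'n::finite \<Rightarrow> (real^'n \<Rightarrow> 'b::real_normed_vector) \<Rightarrow> real^'n \<Rightarrow> 'b" where
  "pderiv_at i f x = frechet_derivative f (at x) (axis i 1)"

definition iter_pderiv :: "'n::finite list \<Rightarrow> (real^'n \<Rightarrow> 'b::real_normed_vector) \<Rightarrow> real^'n \<Rightarrow> 'b" where
  "iter_pderiv is f = foldr pderiv_at is f"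

definition smooth_fun :: "(real^'n::finite \<Rightarrow> 'b::real_normed_vector) \<Rightarrow> bool" where
  "smooth_fun f \<longleftrightarrow> (\<forall>is x. iter_pderiv is f differentiable (at x))"

definition tsupp :: "('a::topological_space \<Rightarrow> 'b::zero) \<Rightarrow> 'a set" where
  "tsupp f = closure {x. f x \<noteq> 0}"

text \<open>Smooth compactly supported functions with support contained in U
  (for U = UNIV: the space C_0^infinity(R^n); for 1-forms: D^1(R^n), a 1-form
  being identified with a vector field via the Euclidean inner product).\<close>
definition test_fun_on :: "(real^'n::finite) set \<Rightarrow> (real^'n \<Rightarrow> 'b::real_normed_vector) \<Rightarrow> bool" where
  "test_fun_on U f \<longleftrightarrow> smooth_fun f \<and> compact (tsupp f) \<and> tsupp f \<subseteq> U"

definition smooth_boundary :: "(real^'n::finite) set \<Rightarrow> bool" where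
  "smooth_boundary \<Omega> \<longleftrightarrow>
     (\<forall>p\<in>frontier \<Omega>. \<exists>r>0. \<exists>\<rho>::real^'n \<Rightarrow> real. smooth_fun \<rho> \<and>
        \<Omega> \<inter> ball p r = {x\<in>ball p r. \<rho> x < 0} \<and>
        (\<forall>x\<in>ball p r. \<exists>v. frechet_derivative \<rho> (at x) v \<noteq> 0))"

definition bounded_smooth_domain :: "(real^'n::finite) set \<Rightarrow> bool" where
  "bounded_smooth_domain \<Omega> \<longleftrightarrow> open \<Omega> \<and> connected \<Omega> \<and> \<Omega> \<noteq> {} \<and> bounded \<Omega> \<and> smooth_boundary \<Omega>"

definition loc_finite_joint_mass :: "('k::finite \<Rightarrow> (real^'n::finite \<Rightarrow> real^'n) \<Rightarrow> real) \<Rightarrow> bool" where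
  "loc_finite_joint_mass T \<longleftrightarrow>
     (\<forall>K. compact K \<longrightarrow> bdd_above
        {\<Sum>k\<in>UNIV. T k (\<omega> k) | \<omega>. (\<forall>k. test_fun_on UNIV (\<omega> k) \<and> tsupp (\<omega> k) \<subseteq> K) \<and>
                                  (\<forall>x. (\<Sum>k\<in>UNIV. (norm (\<omega> k x))\<^sup>2) \<le> 1)})"

definition current_supp :: "('k \<Rightarrow> (real^'n::finite \<Rightarrow> real^'n) \<Rightarrow> real) \<Rightarrow> (real^'n) set" where
  "current_supp T = - \<Union>{U. open U \<and> (\<forall>k \<omega>. test_fun_on U \<omega> \<longrightarrow> T k \<omega> = 0)}"

text \<open>mu, V is the (unique) polar representation: mu = ||T||, V k = vec T_k.
  On R^n a Borel measure finite on compact sets is Radon.\<close>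
definition joint_mass_repr ::
  "('k::finite \<Rightarrow> (real^'n::finite \<Rightarrow> real^'n) \<Rightarrow> real) \<Rightarrow> (real^'n) measure \<Rightarrow> ('k \<Rightarrow> real^'n \<Rightarrow> real^'n) \<Rightarrow> bool" where
  "joint_mass_repr T \<mu> V \<longleftrightarrow>
     sets \<mu> = sets borel \<and> (\<forall>K. compact K \<longrightarrow> emeasure \<mu> K < \<infinity>) \<and>
     (\<forall>k. V k \<in> borel_measurable \<mu>) \<and>
     (AE x in \<mu>. (\<Sum>k\<in>UNIV. (norm (V k x))\<^sup>2) = 1) \<and>
     (\<forall>k \<omega>. test_fun_on UNIV \<omega> \<longrightarrow> T k \<omega> = (\<integral>x. \<omega> x \<bullet> V k x \<partial>\<mu>))"

definition mollifier_scale :: "(real^'n::finite \<Rightarrow> real) \<Rightarrow> real \<Rightarrow> real^'n \<Rightarrow> real" where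
  "mollifier_scale \<eta> \<epsilon> x = \<eta> (x /\<^sub>R \<epsilon>) / \<epsilon> ^ CARD('n)"

definition conv_on :: "(real^'n::finite) set \<Rightarrow> (real^'n \<Rightarrow> real) \<Rightarrow> (real^'n \<Rightarrow> 'b::{banach,second_countable_topology}) \<Rightarrow> real^'n \<Rightarrow> 'b" where
  "conv_on \<Omega> \<eta> f x = (\<integral>y\<in>\<Omega>. \<eta> (x - y) *\<^sub>R f y \<partial>lebesgue)"

definition is_local_L2_rep ::
  "(real^'n::finite) measure \<Rightarrow> (real^'n) set \<Rightarrow> (real^'n \<Rightarrow> 'b::{banach,second_countable_topology}) \<Rightarrow> (real^'n \<Rightarrow> 'b) \<Rightarrow> bool" where
  "is_local_L2_rep \<mu> \<Omega> f g \<longleftrightarrow>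
     (\<forall>K. compact K \<and> K \<subseteq> \<Omega> \<longrightarrow> set_integrable \<mu> K (\<lambda>x. (norm (g x))\<^sup>2)) \<and>
     (\<forall>K \<eta>. compact K \<and> K \<subseteq> \<Omega> \<and> test_fun_on UNIV \<eta> \<and> integral\<^sup>L lebesgue \<eta> = 1 \<longrightarrow>
        ((\<lambda>\<epsilon>. \<integral>x\<in>K. (norm (g x - conv_on \<Omega> (mollifier_scale \<eta> \<epsilon>) f x))\<^sup>2 \<partial>\<mu>)
           \<longlongrightarrow> 0) (at_right 0))"

text \<open>Weak derivative on Omega: Dw x $ k $ i = d_i w_k, a locally integrable N x n matrix field.\<close>
definition weak_deriv_on :: "(real^'n::finite) set \<Rightarrow> (real^'n \<Rightarrow> real^'k::finite) \<Rightarrow> (real^'n \<Rightarrow> real^'n^'k) \<Rightarrow> bool" where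
  "weak_deriv_on \<Omega> w Dw \<longleftrightarrow>
     (\<forall>K. compact K \<and> K \<subseteq> \<Omega> \<longrightarrow> set_integrable lebesgue K Dw) \<and>
     (\<forall>\<phi> k i. test_fun_on \<Omega> (\<phi> :: real^'n \<Rightarrow> real) \<longrightarrow>
        (\<integral>x\<in>\<Omega>. w x $ k * pderiv_at i \<phi> x \<partial>lebesgue) = - (\<integral>x\<in>\<Omega>. Dw x $ k $ i * \<phi> x \<partial>lebesgue))"

end

theory Submission
  imports Defs "HOL-Computational_Algebra.Polynomial"
begin

text \<open>Let \<open>S\<close> be a compact set on which \<open>w\<close> does not vanish; it suffices to show \<open>\<mu> S = 0\<close>,
  because then every test form supported in the open set \<open>{w \<noteq> 0}\<close> is annihilated by \<open>T\<close>.
  Mollify \<open>w\<close> to smooth maps \<open>u\<^sub>\<epsilon>\<close> and test stationarity with the radial field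
  \<open>\<psi> x = s x *\<^sub>R x\<close>, where \<open>s = \<phi> (|u\<^sub>\<epsilon>|\<^sup>2 - \<delta>\<^sup>2)\<close>, \<open>\<phi>\<close> a smooth step, is at least \<open>\<phi> (\<delta>\<^sup>2)\<close>
  on \<open>S\<close> and vanishes off a compact \<open>K \<subseteq> \<Omega>\<close> where \<open>|w| \<ge> \<delta>/2\<close>. Because \<open>\<Sum>\<^sub>k |V\<^sub>k|\<^sup>2 = 1\<close>,
  stationarity gives \<open>\<integral> s d\<mu> = - \<Sum>\<^sub>k \<integral> Ds(V\<^sub>k) (V\<^sub>k \<bullet> x) d\<mu>\<close>, hence
  \<open>\<phi> (\<delta>\<^sup>2) \<mu> S \<le> C \<integral>\<^sub>K |Du\<^sub>\<epsilon>| d\<mu>\<close>. Away from \<open>\<partial>\<Omega>\<close> the derivative \<open>Du\<^sub>\<epsilon>\<close> is the mollification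
  of \<open>Dw\<close>, whose local \<open>L\<^sup>2(\<mu>)\<close>-representative vanishes, so the right-hand side tends to \<open>0\<close>.\<close>

section \<open>Smooth functions\<close>

lemma iter_pderiv_Nil: "iter_pderiv [] f = f"
  by (simp add: iter_pderiv_def)

lemma iter_pderiv_Cons: "iter_pderiv (i # is) f = pderiv_at i (iter_pderiv is f)"
  by (simp add: iter_pderiv_def)

lemma iter_pderiv_snoc: "iter_pderiv (is @ [i]) f = iter_pderiv is (pderiv_at i f)"
  by (simp add: iter_pderiv_def)

lemma smooth_funI_pderiv_closed:
  assumes closed: "\<And>g. g \<in> P \<Longrightarrow> (\<forall>x. g differentiable (at x)) \<and> (\<forall>i. pderiv_at i g \<in> P)"
    and "f \<in> P"
  shows "smooth_fun f"
proof -
  have "iter_pderiv is f \<in> P" for "is"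
    by (induction "is") (auto simp: iter_pderiv_Cons iter_pderiv_Nil assms dest: closed)
  then show ?thesis
    using closed by (auto simp: smooth_fun_def)
qed

lemma smooth_fun_differentiable: "smooth_fun f \<Longrightarrow> f differentiable (at x)"
  unfolding smooth_fun_def by (metis iter_pderiv_Nil)

lemma smooth_fun_pderiv_at: "smooth_fun f \<Longrightarrow> smooth_fun (pderiv_at i f)"
  unfolding smooth_fun_def by (metis iter_pderiv_snoc)

lemma smooth_fun_has_derivative:
  "smooth_fun f \<Longrightarrow> (f has_derivative frechet_derivative f (at x)) (at x)"
  using frechet_derivative_works smooth_fun_differentiable by blast

lemma smooth_fun_continuous_on: "smooth_fun f \<Longrightarrow> continuous_on S f"
  by (meson continuous_at_imp_continuous_on differentiable_imp_continuous_within
      smooth_fun_differentiable)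

lemma pderiv_at_eq: "(f has_derivative f') (at x) \<Longrightarrow> pderiv_at i f x = f' (axis i 1)"
  by (metis frechet_derivative_at pderiv_at_def)

lemma frechet_derivative_eq_sum_pderiv_at:
  fixes f :: "real^'n::finite \<Rightarrow> real"
  assumes "f differentiable (at x)"
  shows "frechet_derivative f (at x) v = (\<Sum>i\<in>UNIV. v $ i * pderiv_at i f x)"
proof -
  have lin: "linear (frechet_derivative f (at x))"
    using assms by (rule linear_frechet_derivative)
  have "v = (\<Sum>i\<in>UNIV. v $ i *\<^sub>R axis i 1)"
    by (simp add: vec_eq_iff axis_def sum.delta if_distrib cong: if_cong)
  then have "frechet_derivative f (at x) v
      = frechet_derivative f (at x) (\<Sum>i\<in>UNIV. v $ i *\<^sub>R axis i 1)"
    by simp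
  also have "\<dots> = (\<Sum>i\<in>UNIV. v $ i * pderiv_at i f x)"
    by (simp add: linear_sum[OF lin] linear_scale[OF lin] pderiv_at_def)
  finally show ?thesis .
qed

lemma smooth_fun_const: "smooth_fun (\<lambda>x::real^'n::finite. c::real)"
proof (rule smooth_funI_pderiv_closed[where P="range (\<lambda>c. \<lambda>x. c)"])
  fix g :: "real^'n \<Rightarrow> real"
  assume "g \<in> range (\<lambda>c. \<lambda>x. c)"
  then obtain d where g: "g = (\<lambda>x. d)"
    by auto
  have "pderiv_at i g = (\<lambda>x. 0)" for i
    unfolding g by (rule ext, rule pderiv_at_eq[where f'="\<lambda>_. 0", simplified]) simp
  then show "(\<forall>x. g differentiable (at x)) \<and> (\<forall>i. pderiv_at i g \<in> range (\<lambda>c. \<lambda>x. c))"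
    using g by auto
qed auto

lemma smooth_fun_component: "smooth_fun (\<lambda>x::real^'n::finite. x $ j)"
proof (rule smooth_funI_pderiv_closed[where P="insert (\<lambda>x. x $ j) (range (\<lambda>c. \<lambda>x. c))"])
  fix g :: "real^'n \<Rightarrow> real"
  assume g: "g \<in> insert (\<lambda>x. x $ j) (range (\<lambda>c. \<lambda>x. c))"
  show "(\<forall>x. g differentiable at x) \<and> (\<forall>i. pderiv_at i g \<in> insert (\<lambda>x. x $ j) (range (\<lambda>c. \<lambda>x. c)))"
  proof (cases "g = (\<lambda>x. x $ j)")
    case True
    have d: "((\<lambda>x. x $ j) has_derivative (\<lambda>x. x $ j)) (at x)" for x :: "real^'n"
      by (rule bounded_linear_imp_has_derivative) auto
    have "pderiv_at i g = (\<lambda>x. if i = j then 1 else 0)" for i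
      unfolding True by (rule ext, subst pderiv_at_eq[OF d]) (simp add: axis_def)
    then show ?thesis
      using True d by (auto intro: differentiableI)
  next
    case False
    then obtain d where g: "g = (\<lambda>x. d)"
      using g by auto
    have "pderiv_at i g = (\<lambda>x. 0)" for i
      unfolding g by (rule ext, rule pderiv_at_eq[where f'="\<lambda>_. 0", simplified]) simp
    then show ?thesis
      using g by auto
  qed
qed auto

lemma pderiv_at_affine:
  assumes "smooth_fun f"
  shows "pderiv_at i (\<lambda>x. f (c *\<^sub>R x + b)) = (\<lambda>x. c *\<^sub>R pderiv_at i f (c *\<^sub>R x + b))"
    and "(\<lambda>x. f (c *\<^sub>R x + b)) differentiable (at x)"
proof -
  have d: "((\<lambda>x. f (c *\<^sub>R x + b)) has_derivative
      (\<lambda>v. frechet_derivative f (at (c *\<^sub>R x + b)) (c *\<^sub>R v))) (at x)" for x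
  proof -
    have "((f \<circ> (\<lambda>x. c *\<^sub>R x + b)) has_derivative
        (frechet_derivative f (at (c *\<^sub>R x + b)) \<circ> (\<lambda>v. c *\<^sub>R v))) (at x)"
      using assms by (intro diff_chain_at smooth_fun_has_derivative) (auto intro!: derivative_eq_intros)
    then show ?thesis
      by (simp add: o_def)
  qed
  have lin: "linear (frechet_derivative f (at y))" for y
    using assms by (intro linear_frechet_derivative smooth_fun_differentiable)
  show "pderiv_at i (\<lambda>x. f (c *\<^sub>R x + b)) = (\<lambda>x. c *\<^sub>R pderiv_at i f (c *\<^sub>R x + b))"
    using pderiv_at_eq[OF d] by (auto simp: pderiv_at_def linear_scale[OF lin])
  show "(\<lambda>x. f (c *\<^sub>R x + b)) differentiable (at x)"
    using d by (rule differentiableI)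
qed

definition smooth_real :: "(real \<Rightarrow> real) \<Rightarrow> bool" where
  "smooth_real h \<longleftrightarrow> (\<forall>m t. (deriv ^^ m) h field_differentiable (at t))"

lemma smooth_real_deriv: "smooth_real h \<Longrightarrow> smooth_real (deriv h)"
  unfolding smooth_real_def by (metis funpow_Suc_right o_apply)

lemma smooth_real_DERIV: "smooth_real h \<Longrightarrow> (h has_real_derivative deriv h t) (at t)"
  unfolding smooth_real_def by (metis DERIV_deriv_iff_field_differentiable funpow_0)

lemma smooth_real_continuous_on: "smooth_real h \<Longrightarrow> continuous_on S h"
  by (meson DERIV_isCont continuous_at_imp_continuous_on smooth_real_DERIV)

text \<open>Closing the smooth functions under these operations gives a class that is stable under
  partial derivatives (by the product and chain rules), so all its members are smooth.\<close>

inductive_set smooth_expr :: "(real^'n::finite \<Rightarrow> real) set" where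
  base: "smooth_fun f \<Longrightarrow> f \<in> smooth_expr"
| add: "f \<in> smooth_expr \<Longrightarrow> g \<in> smooth_expr \<Longrightarrow> (\<lambda>x. f x + g x) \<in> smooth_expr"
| mult: "f \<in> smooth_expr \<Longrightarrow> g \<in> smooth_expr \<Longrightarrow> (\<lambda>x. f x * g x) \<in> smooth_expr"
| comp: "smooth_real h \<Longrightarrow> f \<in> smooth_expr \<Longrightarrow> (\<lambda>x. h (f x)) \<in> smooth_expr"
| affine: "smooth_fun f \<Longrightarrow> (\<lambda>x. f (c *\<^sub>R x + b)) \<in> smooth_expr"

lemma smooth_expr_pderiv_closed:
  assumes "f \<in> smooth_expr"
  shows "(\<forall>x. f differentiable (at x)) \<and> (\<forall>i. pderiv_at i f \<in> smooth_expr)"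
  using assms
proof induction
  case (base f)
  then show ?case
    by (auto intro: smooth_fun_differentiable smooth_fun_pderiv_at smooth_expr.base)
next
  case (add f g)
  have d: "((\<lambda>x. f x + g x) has_derivative
      (\<lambda>v. frechet_derivative f (at x) v + frechet_derivative g (at x) v)) (at x)" for x
    using add by (intro has_derivative_add frechet_derivative_works[THEN iffD1]) auto
  have "pderiv_at i (\<lambda>x. f x + g x) = (\<lambda>x. pderiv_at i f x + pderiv_at i g x)" for i
    using pderiv_at_eq[OF d] by (auto simp: pderiv_at_def)
  moreover have "(\<lambda>x. pderiv_at i f x + pderiv_at i g x) \<in> smooth_expr" for i
    using add by (intro smooth_expr.add) auto
  ultimately show ?case
    using differentiableI[OF d] by auto
next
  case (mult f g)
  have d: "((\<lambda>x. f x * g x) has_derivative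
      (\<lambda>v. f x * frechet_derivative g (at x) v + frechet_derivative f (at x) v * g x)) (at x)" for x
    using mult by (intro has_derivative_mult frechet_derivative_works[THEN iffD1]) auto
  have "pderiv_at i (\<lambda>x. f x * g x) = (\<lambda>x. f x * pderiv_at i g x + pderiv_at i f x * g x)" for i
    using pderiv_at_eq[OF d] by (auto simp: pderiv_at_def)
  moreover have "(\<lambda>x. f x * pderiv_at i g x + pderiv_at i f x * g x) \<in> smooth_expr" for i
    using mult by (intro smooth_expr.add smooth_expr.mult) auto
  ultimately show ?case
    using differentiableI[OF d] by auto
next
  case (comp h f)
  have d: "((\<lambda>x. h (f x)) has_derivative (\<lambda>v. deriv h (f x) * frechet_derivative f (at x) v)) (at x)" for x
  proof -
    have "((h \<circ> f) has_derivative ((*) (deriv h (f x)) \<circ> frechet_derivative f (at x))) (at x)"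
      using comp smooth_real_DERIV[OF comp(1), of "f x"]
      by (intro diff_chain_at frechet_derivative_works[THEN iffD1]) (auto simp: has_field_derivative_def)
    then show ?thesis
      by (simp add: o_def)
  qed
  have "pderiv_at i (\<lambda>x. h (f x)) = (\<lambda>x. deriv h (f x) * pderiv_at i f x)" for i
    using pderiv_at_eq[OF d] by (auto simp: pderiv_at_def)
  moreover have "(\<lambda>x. deriv h (f x) * pderiv_at i f x) \<in> smooth_expr" for i
    using comp(3) by (intro smooth_expr.mult[OF smooth_expr.comp[OF smooth_real_deriv[OF comp(1)] comp(2)]])
      auto
  ultimately show ?case
    using differentiableI[OF d] by auto
next
  case (affine f c b)
  have "(\<lambda>x. c * pderiv_at i f (c *\<^sub>R x + b)) \<in> smooth_expr" for i
    by (rule smooth_expr.mult[OF smooth_expr.base[OF smooth_fun_const]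
          smooth_expr.affine[OF smooth_fun_pderiv_at[OF affine]]])
  then show ?case
    using pderiv_at_affine[OF affine] by simp
qed

lemma smooth_fun_if_smooth_expr: "f \<in> smooth_expr \<Longrightarrow> smooth_fun f"
  by (rule smooth_funI_pderiv_closed[where P=smooth_expr, OF smooth_expr_pderiv_closed])

lemma smooth_fun_add:
  fixes f g :: "real^'n::finite \<Rightarrow> real"
  shows "smooth_fun f \<Longrightarrow> smooth_fun g \<Longrightarrow> smooth_fun (\<lambda>x. f x + g x)"
  by (rule smooth_fun_if_smooth_expr[OF smooth_expr.add[OF smooth_expr.base smooth_expr.base]])

lemma smooth_fun_mult:
  fixes f g :: "real^'n::finite \<Rightarrow> real"
  shows "smooth_fun f \<Longrightarrow> smooth_fun g \<Longrightarrow> smooth_fun (\<lambda>x. f x * g x)"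
  by (rule smooth_fun_if_smooth_expr[OF smooth_expr.mult[OF smooth_expr.base smooth_expr.base]])

lemma smooth_fun_compose_real:
  fixes f :: "real^'n::finite \<Rightarrow> real"
  shows "smooth_real h \<Longrightarrow> smooth_fun f \<Longrightarrow> smooth_fun (\<lambda>x. h (f x))"
  by (rule smooth_fun_if_smooth_expr[OF smooth_expr.comp[OF _ smooth_expr.base]])

lemma smooth_fun_affine:
  fixes f :: "real^'n::finite \<Rightarrow> real"
  shows "smooth_fun f \<Longrightarrow> smooth_fun (\<lambda>x. f (c *\<^sub>R x + b))"
  by (rule smooth_fun_if_smooth_expr[OF smooth_expr.affine])

lemma smooth_fun_sum:
  fixes f :: "'j \<Rightarrow> real^'n::finite \<Rightarrow> real"
  shows   "finite S \<Longrightarrow> (\<And>j. j \<in> S \<Longrightarrow> smooth_fun (f j)) \<Longrightarrow> smooth_fun (\<lambda>x. \<Sum>j\<in>S. f j x)"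
proof (induction S rule: finite_induct)
  case empty
  then show ?case
    using smooth_fun_const[of 0] by simp
next
  case (insert a F)
  then show ?case
    using smooth_fun_add[of "f a" "\<lambda>x. \<Sum>j\<in>F. f j x"] by simp
qed

lemma smooth_fun_sum_scaleR:
  fixes f :: "'j \<Rightarrow> real^'n::finite \<Rightarrow> real" and c :: "'j \<Rightarrow> 'b::real_normed_vector"
  assumes J: "finite J" and f: "\<And>j. j \<in> J \<Longrightarrow> smooth_fun (f j)"
  shows "smooth_fun (\<lambda>x. \<Sum>j\<in>J. f j x *\<^sub>R c j)"
proof (rule smooth_funI_pderiv_closed[where P="{(\<lambda>x. \<Sum>j\<in>J. g j x *\<^sub>R c j) | g. \<forall>j\<in>J. smooth_fun (g j)}"])
  fix F
  assume "F \<in> {(\<lambda>x. \<Sum>j\<in>J. g j x *\<^sub>R c j) | g. \<forall>j\<in>J. smooth_fun (g j)}"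
  then obtain g where F: "F = (\<lambda>x. \<Sum>j\<in>J. g j x *\<^sub>R c j)" and g: "\<forall>j\<in>J. smooth_fun (g j)"
    by auto
  have d: "(F has_derivative (\<lambda>v. \<Sum>j\<in>J. frechet_derivative (g j) (at x) v *\<^sub>R c j)) (at x)" for x
    unfolding F using g by (intro has_derivative_sum has_derivative_scaleR_left smooth_fun_has_derivative) auto
  have pd: "pderiv_at i F = (\<lambda>x. \<Sum>j\<in>J. pderiv_at i (g j) x *\<^sub>R c j)" for i
    by (rule ext, subst pderiv_at_eq[OF d]) (simp add: pderiv_at_def)
  have "\<forall>j\<in>J. smooth_fun (pderiv_at i (g j))" for i
    using g smooth_fun_pderiv_at by blast
  then have "pderiv_at i F \<in> {(\<lambda>x. \<Sum>j\<in>J. g j x *\<^sub>R c j) | g. \<forall>j\<in>J. smooth_fun (g j)}" for i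
    unfolding pd by (intro CollectI exI[of _ "\<lambda>j. pderiv_at i (g j)"]) simp
  then show "(\<forall>x. F differentiable at x)
      \<and> (\<forall>i. pderiv_at i F \<in> {(\<lambda>x. \<Sum>j\<in>J. g j x *\<^sub>R c j) | g. \<forall>j\<in>J. smooth_fun (g j)})"
    using differentiableI[OF d] by blast
qed (use f in blast)

lemma smooth_fun_scaleR_id:
  fixes s :: "real^'n::finite \<Rightarrow> real"
  assumes "smooth_fun s"
  shows "smooth_fun (\<lambda>x. s x *\<^sub>R x)"
proof -
  have "(\<lambda>x. s x *\<^sub>R x) = (\<lambda>x. \<Sum>j\<in>UNIV. (s x * x $ j) *\<^sub>R axis j (1::real))"
    by (auto simp: vec_eq_iff axis_def sum.delta if_distrib cong: if_cong)
  moreover have "smooth_fun (\<lambda>x. s x * x $ j)" for j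
    using assms by (intro smooth_fun_mult smooth_fun_component)
  ultimately show ?thesis
    using smooth_fun_sum_scaleR[of UNIV "\<lambda>j x. s x * x $ j" "\<lambda>j. axis j (1::real)"] by simp
qed

section \<open>A flat smooth step\<close>

lemma poly_div_exp_tendsto_0: "((\<lambda>x. poly p x / exp x) \<longlongrightarrow> (0::real)) at_top"
proof -
  have "((\<lambda>x. \<Sum>i\<le>degree p. coeff p i * (x ^ i / exp x)) \<longlongrightarrow> (\<Sum>i\<le>degree p. coeff p i * 0)) at_top"
    by (intro tendsto_sum tendsto_mult_left tendsto_power_div_exp_0)
  moreover have "(\<lambda>x. \<Sum>i\<le>degree p. coeff p i * (x ^ i / exp x)) = (\<lambda>x. poly p x / exp x)"
    by (auto simp: poly_altdef sum_divide_distrib)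
  ultimately show ?thesis
    by simp
qed

text \<open>Every derivative of \<open>t \<mapsto> exp (-1/t)\<close> (extended by \<open>0\<close> for \<open>t \<le> 0\<close>) has the form
  \<open>p (1/t) exp (-1/t)\<close> for a polynomial \<open>p\<close>; \<open>exp_flat_deriv_poly\<close> computes the next \<open>p\<close>.\<close>

definition exp_flat :: "real poly \<Rightarrow> real \<Rightarrow> real" where
  "exp_flat p t = (if t > 0 then poly p (1/t) * exp (-1/t) else 0)"

definition exp_flat_deriv_poly :: "real poly \<Rightarrow> real poly" where
  "exp_flat_deriv_poly p = [:0, 0, 1:] * (p - pderiv p)"

lemma exp_flat_div_tendsto_0: "((\<lambda>h. exp_flat p h / h) \<longlongrightarrow> 0) (at 0)"
proof -
  have "((\<lambda>h. poly ([:0,1:] * p) (inverse h) / exp (inverse h)) \<longlongrightarrow> 0) (at_right 0)"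
    by (rule filterlim_compose[OF poly_div_exp_tendsto_0 filterlim_inverse_at_top_right])
  then have "((\<lambda>h. exp_flat p h / h) \<longlongrightarrow> 0) (at_right 0)"
    by (rule Lim_transform_eventually, intro eventually_at_right_less[THEN eventually_mono])
      (auto simp: exp_flat_def exp_minus field_simps)
  moreover have "((\<lambda>h. exp_flat p h / h) \<longlongrightarrow> 0) (at_left 0)"
    by (rule Lim_transform_eventually[where f="\<lambda>_. 0"],
        auto intro!: eventually_mono[OF eventually_at_left_real[where a=0 and b="-1"]] simp: exp_flat_def)
  ultimately show ?thesis
    by (simp add: filterlim_split_at)
qed

lemma exp_flat_has_real_derivative:
  "(exp_flat p has_real_derivative exp_flat (exp_flat_deriv_poly p) t) (at t)"
proof -
  consider "t > 0" | "t < 0" | "t = 0"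
    by linarith
  then show ?thesis
  proof cases
    case 1
    have d: "((\<lambda>t. poly p (1/t) * exp (-1/t)) has_real_derivative
        (poly (pderiv p) (1/t) * (- 1 / t^2)) * exp (-1/t) + poly p (1/t) * (exp (-1/t) * (1/t^2))) (at t)"
      using 1 by (auto intro!: derivative_eq_intros simp: power2_eq_square field_simps)
    have e: "(poly (pderiv p) (1/t) * (- 1 / t^2)) * exp (-1/t) + poly p (1/t) * (exp (-1/t) * (1/t^2))
        = exp_flat (exp_flat_deriv_poly p) t"
      using 1 by (simp add: exp_flat_def exp_flat_deriv_poly_def power2_eq_square field_simps)
    show ?thesis
      by (rule has_field_derivative_transform_within_open[where S="{0<..}"
            and f="\<lambda>t. poly p (1/t) * exp (-1/t)"]) (use d e 1 in \<open>auto simp: exp_flat_def\<close>)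
  next
    case 2
    then have z: "exp_flat (exp_flat_deriv_poly p) t = 0"
      by (simp add: exp_flat_def)
    show ?thesis
      unfolding z by (rule has_field_derivative_transform_within_open[of "\<lambda>t. 0" 0 t "{..<0}"])
        (use 2 in \<open>auto simp: exp_flat_def\<close>)
  next
    case 3
    have "exp_flat p 0 = 0" "exp_flat (exp_flat_deriv_poly p) 0 = 0"
      by (simp_all add: exp_flat_def)
    with exp_flat_div_tendsto_0[of p] show ?thesis
      using 3 by (simp add: DERIV_def)
  qed
qed

lemma smooth_real_exp_flat: "smooth_real (exp_flat p)"
proof -
  have "deriv (exp_flat p) = exp_flat (exp_flat_deriv_poly p)" for p
    using exp_flat_has_real_derivative DERIV_imp_deriv by blast
  then have "(deriv ^^ m) (exp_flat p) = exp_flat ((exp_flat_deriv_poly ^^ m) p)" for m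
    by (induction m) auto
  then show ?thesis
    unfolding smooth_real_def field_differentiable_def
    by (metis exp_flat_has_real_derivative)
qed

definition smooth_step :: "real \<Rightarrow> real" where
  "smooth_step t = (if t > 0 then exp (-1/t) else 0)"

lemma smooth_step_eq_exp_flat: "smooth_step = exp_flat 1"
  by (auto simp: smooth_step_def exp_flat_def)

lemma smooth_real_smooth_step: "smooth_real smooth_step"
  by (simp add: smooth_step_eq_exp_flat smooth_real_exp_flat)

lemma smooth_step_pos_iff: "smooth_step t > 0 \<longleftrightarrow> t > 0"
  by (simp add: smooth_step_def)

lemma smooth_step_eq_0: "t \<le> 0 \<Longrightarrow> smooth_step t = 0"
  by (simp add: smooth_step_def)

lemma smooth_step_nonneg: "smooth_step t \<ge> 0"
  by (simp add: smooth_step_def)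

lemma smooth_step_mono: "t \<le> t' \<Longrightarrow> smooth_step t \<le> smooth_step t'"
  by (auto simp: smooth_step_def divide_simps)

lemma bounded_deriv_smooth_step_Icc: "\<exists>C. \<forall>t. a \<le> t \<longrightarrow> t \<le> b \<longrightarrow> \<bar>deriv smooth_step t\<bar> \<le> C"
proof -
  have "bounded (deriv smooth_step ` {a..b})"
    by (intro compact_imp_bounded compact_continuous_image smooth_real_continuous_on smooth_real_deriv
        smooth_real_smooth_step compact_Icc)
  then obtain C where "\<forall>y \<in> deriv smooth_step ` {a..b}. norm y \<le> C"
    by (auto simp: bounded_iff)
  then show ?thesis
    by (intro exI[of _ C]) auto
qed

lemma pderiv_at_smooth_step_sum_squares:
  fixes u :: "'j::finite \<Rightarrow> real^'n::finite \<Rightarrow> real"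
  assumes u: "\<And>j. smooth_fun (u j)"
  shows "pderiv_at i (\<lambda>x. smooth_step ((\<Sum>j\<in>UNIV. (u j x)\<^sup>2) - c)) x
    = deriv smooth_step ((\<Sum>j\<in>UNIV. (u j x)\<^sup>2) - c) * (\<Sum>j\<in>UNIV. 2 * u j x * pderiv_at i (u j) x)"
proof -
  let ?Q = "\<lambda>x. (\<Sum>j\<in>UNIV. (u j x)\<^sup>2) - c"
  have "((\<lambda>x. \<Sum>j\<in>UNIV. u j x * u j x) has_derivative (\<lambda>v. \<Sum>j\<in>UNIV.
      u j x * frechet_derivative (u j) (at x) v + frechet_derivative (u j) (at x) v * u j x)) (at x)"
    by (intro has_derivative_sum has_derivative_mult smooth_fun_has_derivative u)
  from has_derivative_diff[OF this has_derivative_const[of c]]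
  have "(?Q has_derivative (\<lambda>v. \<Sum>j\<in>UNIV. 2 * u j x * frechet_derivative (u j) (at x) v)) (at x)"
    unfolding power2_eq_square[of "u _ _"]
    by (rule has_derivative_eq_rhs) (auto simp: fun_eq_iff algebra_simps intro!: sum.cong)
  from diff_chain_at[OF this smooth_real_DERIV[OF smooth_real_smooth_step, unfolded has_field_derivative_def]]
  have "((\<lambda>x. smooth_step (?Q x)) has_derivative
      (\<lambda>v. deriv smooth_step (?Q x) * (\<Sum>j\<in>UNIV. 2 * u j x * frechet_derivative (u j) (at x) v))) (at x)"
    by (simp add: o_def)
  then show ?thesis
    by (subst pderiv_at_eq) (auto simp: pderiv_at_def)
qed

lemma sum_abs_pderiv_smooth_step_sum_squares_le:
  fixes u :: "'j::finite \<Rightarrow> real^'n::finite \<Rightarrow> real" and \<delta> M C :: real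
  assumes u: "\<And>j. smooth_fun (u j)" and M: "\<And>j x. \<bar>u j x\<bar> \<le> M"
    and C: "\<And>t. - (\<delta>\<^sup>2) \<le> t \<Longrightarrow> t \<le> CARD('j) * M\<^sup>2 \<Longrightarrow> \<bar>deriv smooth_step t\<bar> \<le> C"
  shows "(\<Sum>i\<in>UNIV. \<bar>pderiv_at i (\<lambda>x. smooth_step ((\<Sum>j\<in>UNIV. (u j x)\<^sup>2) - \<delta>\<^sup>2)) x\<bar>)
    \<le> 2 * C * M * (\<Sum>i\<in>UNIV. \<Sum>j\<in>UNIV. \<bar>pderiv_at i (u j) x\<bar>)"
proof -
  let ?Q = "(\<Sum>j\<in>UNIV. (u j x)\<^sup>2) - \<delta>\<^sup>2"
  have "(u j x)\<^sup>2 \<le> M\<^sup>2" for j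
    using M[of j x] by (metis abs_le_square_iff abs_of_nonneg order_trans abs_ge_zero)
  then have "(\<Sum>j\<in>UNIV. (u j x)\<^sup>2) \<le> CARD('j) * M\<^sup>2"
    using sum_bounded_above[of UNIV "\<lambda>j. (u j x)\<^sup>2" "M\<^sup>2"] by simp
  then have "?Q \<le> CARD('j) * M\<^sup>2"
    using zero_le_power2[of \<delta>] by linarith
  moreover have "- (\<delta>\<^sup>2) \<le> ?Q"
    by (simp add: sum_nonneg)
  ultimately have dC: "\<bar>deriv smooth_step ?Q\<bar> \<le> C"
    by (intro C)
  have "\<bar>pderiv_at i (\<lambda>x. smooth_step ((\<Sum>j\<in>UNIV. (u j x)\<^sup>2) - \<delta>\<^sup>2)) x\<bar>
      \<le> C * (\<Sum>j\<in>UNIV. 2 * M * \<bar>pderiv_at i (u j) x\<bar>)" for i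
  proof -
    have "\<bar>\<Sum>j\<in>UNIV. 2 * u j x * pderiv_at i (u j) x\<bar> \<le> (\<Sum>j\<in>UNIV. 2 * M * \<bar>pderiv_at i (u j) x\<bar>)"
      using M by (intro order_trans[OF sum_abs] sum_mono) (simp add: abs_mult mult_right_mono)
    then show ?thesis
      unfolding pderiv_at_smooth_step_sum_squares[OF u] abs_mult
      using dC by (intro mult_mono) (auto intro: sum_nonneg)
  qed
  then have "(\<Sum>i\<in>UNIV. \<bar>pderiv_at i (\<lambda>x. smooth_step ((\<Sum>j\<in>UNIV. (u j x)\<^sup>2) - \<delta>\<^sup>2)) x\<bar>)
      \<le> (\<Sum>i\<in>UNIV. C * (\<Sum>j\<in>UNIV. 2 * M * \<bar>pderiv_at i (u j) x\<bar>))"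
    by (rule sum_mono)
  then show ?thesis
    by (simp add: sum_distrib_left mult_ac)
qed

section \<open>Mollification\<close>

lemma bounded_range_compact_support:
  fixes f :: "'a::metric_space \<Rightarrow> 'b::real_normed_vector"
  assumes "continuous_on UNIV f" "compact K" "\<And>x. x \<notin> K \<Longrightarrow> f x = 0"
  shows "\<exists>B. \<forall>x. norm (f x) \<le> B"
proof -
  have "bounded (f ` K)"
    using assms by (meson compact_continuous_image compact_imp_bounded continuous_on_subset subset_UNIV)
  then obtain B where "\<forall>y\<in>f ` K. norm y \<le> B"
    by (auto simp: bounded_iff)
  then have "norm (f x) \<le> max B 0" for x
    using assms(3)[of x] by (cases "x \<in> K") force+
  then show ?thesis
    by blast
qed

lemma
  fixes f :: "real^'n::finite \<Rightarrow> real"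
  assumes c: "continuous_on UNIV f" and K: "compact K" and z: "\<And>x. x \<notin> K \<Longrightarrow> f x = 0"
  shows integrable_lborel_compact_support: "integrable lborel f"
    and integral_lebesgue_eq_lborel_compact_support: "integral\<^sup>L lebesgue f = integral\<^sup>L lborel f"
    and integral_cbox_eq_lborel_compact_support:
      "K \<subseteq> cbox a b \<Longrightarrow> integral (cbox a b) f = integral\<^sup>L lborel f"
proof -
  have "(\<lambda>x. indicator K x *\<^sub>R f x) = f"
    by (intro ext) (use z in \<open>auto simp: indicator_def\<close>)
  then show i: "integrable lborel f"
    using borel_integrable_compact[OF K continuous_on_subset[OF c]] by auto
  have m: "f \<in> borel_measurable borel"
    by (rule borel_measurable_continuous_onI[OF c])
  then show "integral\<^sup>L lebesgue f = integral\<^sup>L lborel f"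
    by (simp add: integral_completion)
  assume "K \<subseteq> cbox a b"
  then have "(\<lambda>x. if x \<in> cbox a b then f x else 0) = f"
    by (intro ext) (use z in auto)
  then show "integral (cbox a b) f = integral\<^sup>L lborel f"
    using integral_restrict_UNIV[of "cbox a b" f] integral_unique[OF has_integral_integral_lborel[OF i]]
    by simp
qed

lemma integral_lborel_affine:
  fixes f :: "real^'n::finite \<Rightarrow> real"
  assumes c: "c \<noteq> 0" and f: "f \<in> borel_measurable borel"
  shows "integral\<^sup>L lborel f = \<bar>c\<bar>^CARD('n) * integral\<^sup>L lborel (\<lambda>z. f (t + c *\<^sub>R z))"
proof -
  have m: "(\<lambda>z::real^'n. t + c *\<^sub>R z) \<in> measurable lborel borel"
    by simp
  have "integral\<^sup>L lborel f
      = integral\<^sup>L (density (distr lborel borel (\<lambda>z::real^'n. t + c *\<^sub>R z)) (\<lambda>_. \<bar>c\<bar>^DIM(real^'n))) f"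
    using lborel_affine[OF c, of t] by simp
  also have "\<dots> = integral\<^sup>L (distr lborel borel (\<lambda>z::real^'n. t + c *\<^sub>R z)) (\<lambda>x. \<bar>c\<bar>^DIM(real^'n) *\<^sub>R f x)"
    by (rule integral_density) (use f in auto)
  also have "\<dots> = integral\<^sup>L lborel (\<lambda>z. \<bar>c\<bar>^DIM(real^'n) *\<^sub>R f (t + c *\<^sub>R z))"
    by (rule integral_distr[OF m]) (use f in simp)
  finally show ?thesis
    by simp
qed

definition unit_bump :: "real^'n::finite \<Rightarrow> real" where
  "unit_bump x = smooth_step (1 - x \<bullet> x)"

lemma smooth_fun_unit_bump: "smooth_fun unit_bump"
proof -
  have "smooth_fun (\<lambda>x::real^'n. 1 + (-1) * (\<Sum>j\<in>UNIV. x $ j * x $ j))"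
    by (intro smooth_fun_add smooth_fun_mult smooth_fun_const smooth_fun_sum smooth_fun_component) auto
  from smooth_fun_compose_real[OF smooth_real_smooth_step this]
  show ?thesis
    by (simp add: unit_bump_def[abs_def] inner_vec_def)
qed

lemma unit_bump_nonneg: "unit_bump x \<ge> 0"
  by (simp add: unit_bump_def smooth_step_nonneg)

lemma norm_less_1_if_unit_bump_nonzero: "unit_bump x \<noteq> 0 \<Longrightarrow> norm x < 1"
proof -
  assume "unit_bump x \<noteq> 0"
  then have "1 - x \<bullet> x > 0"
    unfolding unit_bump_def by (metis not_less smooth_step_eq_0)
  then have "norm x ^ 2 < 1 ^ 2"
    by (simp add: power2_norm_eq_inner)
  then show ?thesis
    by (rule power2_less_imp_less) simp
qed

lemma integral_unit_bump_pos: "integral\<^sup>L lborel (unit_bump :: real^'n::finite \<Rightarrow> real) > 0"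
proof -
  let ?B = "ball (0::real^'n) (1/2)"
  have lb: "smooth_step (3/4) \<le> unit_bump x" if "norm x \<le> 1/2" for x :: "real^'n"
  proof -
    have "norm x ^ 2 \<le> (1/2)^2"
      using that by (simp add: power_mono)
    moreover have "x \<bullet> x = (norm x)^2"
      by (simp add: power2_norm_eq_inner)
    ultimately have "x \<bullet> x \<le> 1/4"
      by (simp add: power2_eq_square)
    then show ?thesis
      unfolding unit_bump_def by (intro smooth_step_mono) simp
  qed
  have "integral\<^sup>L lborel (\<lambda>x. smooth_step (3/4) * indicator ?B x) \<le> integral\<^sup>L lborel (unit_bump :: real^'n \<Rightarrow> real)"
  proof (rule Bochner_Integration.integral_mono)
    show "integrable lborel (unit_bump :: real^'n \<Rightarrow> real)"
      using smooth_fun_continuous_on[OF smooth_fun_unit_bump] norm_less_1_if_unit_bump_nonzero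
      by (intro integrable_lborel_compact_support[where K="cball 0 1"]) force+
    show "integrable lborel (\<lambda>x::real^'n. smooth_step (3/4) * indicator ?B x)"
      using emeasure_lborel_ball_finite by (intro integrable_mult_right integrable_real_indicator) auto
    show "smooth_step (3/4) * indicator ?B x \<le> unit_bump x" for x :: "real^'n"
      using lb[of x] unit_bump_nonneg[of x] by (auto simp: indicator_def)
  qed
  moreover have "smooth_step (3/4) * measure lborel ?B > 0"
    using content_ball_pos[of "1/2" 0] smooth_step_pos_iff[of "3/4"] by simp
  ultimately show ?thesis
    by simp
qed

definition std_mollifier :: "real^'n::finite \<Rightarrow> real" where
  "std_mollifier x = unit_bump x / integral\<^sup>L lborel (unit_bump :: real^'n \<Rightarrow> real)"

lemma smooth_fun_std_mollifier: "smooth_fun std_mollifier"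
  unfolding std_mollifier_def[abs_def] divide_inverse
  by (intro smooth_fun_mult smooth_fun_unit_bump smooth_fun_const)

lemma std_mollifier_nonneg:
  fixes x :: "real^'n::finite"
  shows "std_mollifier x \<ge> 0"
  using unit_bump_nonneg[of x] integral_unit_bump_pos[where 'n='n] by (simp add: std_mollifier_def)

lemma norm_less_1_if_std_mollifier_nonzero: "std_mollifier x \<noteq> 0 \<Longrightarrow> norm x < 1"
  by (simp add: std_mollifier_def norm_less_1_if_unit_bump_nonzero)

lemma integral_lborel_std_mollifier: "integral\<^sup>L lborel (std_mollifier :: real^'n::finite \<Rightarrow> real) = 1"
  using integral_unit_bump_pos[where 'n='n] unfolding std_mollifier_def by simp

lemma test_fun_on_std_mollifier: "test_fun_on UNIV std_mollifier"
proof -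
  have "{x. std_mollifier x \<noteq> 0} \<subseteq> cball 0 1"
    using norm_less_1_if_std_mollifier_nonzero by fastforce
  then show ?thesis
    unfolding test_fun_on_def tsupp_def
    using smooth_fun_std_mollifier compact_closure bounded_subset[OF bounded_cball] by blast
qed

lemma integral_lebesgue_std_mollifier:
  "integral\<^sup>L lebesgue (std_mollifier :: real^'n::finite \<Rightarrow> real) = 1"
  using smooth_fun_continuous_on[OF smooth_fun_std_mollifier] norm_less_1_if_std_mollifier_nonzero
    integral_lborel_std_mollifier
  by (subst integral_lebesgue_eq_lborel_compact_support[where K="cball 0 1"]) force+

abbreviation mollifier :: "real \<Rightarrow> real^'n::finite \<Rightarrow> real" where
  "mollifier \<equiv> mollifier_scale std_mollifier"

lemma smooth_fun_mollifier_scale: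
  fixes \<eta> :: "real^'n::finite \<Rightarrow> real"
  assumes "smooth_fun \<eta>"
  shows "smooth_fun (mollifier_scale \<eta> \<epsilon>)"
proof -
  have eq: "mollifier_scale \<eta> \<epsilon> = (\<lambda>x. (1 / \<epsilon> ^ CARD('n)) * \<eta> (inverse \<epsilon> *\<^sub>R x + 0))"
    by (auto simp: mollifier_scale_def)
  show ?thesis
    unfolding eq by (intro smooth_fun_mult smooth_fun_const smooth_fun_affine assms)
qed

lemma smooth_fun_mollifier: "smooth_fun (mollifier \<epsilon>)"
  by (rule smooth_fun_mollifier_scale[OF smooth_fun_std_mollifier])

lemma continuous_on_mollifier: "continuous_on S (mollifier \<epsilon>)"
  by (rule smooth_fun_continuous_on[OF smooth_fun_mollifier])

lemma continuous_on_mollifier_shift: "continuous_on S (\<lambda>y. mollifier \<epsilon> (x - y))"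
  by (intro continuous_on_compose2[OF continuous_on_mollifier[of UNIV]] continuous_intros) auto

lemma mollifier_nonneg: "\<epsilon> > 0 \<Longrightarrow> mollifier \<epsilon> z \<ge> 0"
  by (auto simp: mollifier_scale_def intro!: divide_nonneg_pos std_mollifier_nonneg)

lemma norm_less_if_mollifier_nonzero: "\<epsilon> > 0 \<Longrightarrow> mollifier \<epsilon> z \<noteq> 0 \<Longrightarrow> norm z < \<epsilon>"
  using norm_less_1_if_std_mollifier_nonzero[of "z /\<^sub>R \<epsilon>"]
  by (auto simp: mollifier_scale_def divide_simps)

lemma mollifier_shift_eq_0: "\<epsilon> > 0 \<Longrightarrow> y \<notin> cball x \<epsilon> \<Longrightarrow> mollifier \<epsilon> (x - y) = 0"
  using norm_less_if_mollifier_nonzero[of \<epsilon> "x - y"] by (auto simp: dist_norm)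

lemma integral_lborel_mollifier_shift:
  fixes x :: "real^'n::finite"
  assumes e: "\<epsilon> > 0"
  shows "integral\<^sup>L lborel (\<lambda>y. mollifier \<epsilon> (x - y)) = 1"
proof -
  have meas: "(\<lambda>y. mollifier \<epsilon> (x - y)) \<in> borel_measurable borel"
    by (intro borel_measurable_continuous_onI continuous_on_mollifier_shift)
  have "integral\<^sup>L lborel (\<lambda>y. mollifier \<epsilon> (x - y))
      = \<bar>- \<epsilon>\<bar>^CARD('n) * integral\<^sup>L lborel (\<lambda>z. mollifier \<epsilon> (x - (x + (- \<epsilon>) *\<^sub>R z)))"
    by (rule integral_lborel_affine) (use e meas in auto)
  also have "(\<lambda>z. mollifier \<epsilon> (x - (x + (- \<epsilon>) *\<^sub>R z))) = (\<lambda>z. (1 / \<epsilon> ^ CARD('n)) * std_mollifier z)"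
    using e by (auto simp: mollifier_scale_def)
  also have "\<bar>- \<epsilon>\<bar>^CARD('n) * integral\<^sup>L lborel (\<lambda>z. (1 / \<epsilon> ^ CARD('n)) * (std_mollifier :: real^'n \<Rightarrow> real) z) = 1"
    using e integral_lborel_std_mollifier[where 'n='n] by simp
  finally show ?thesis .
qed

lemma test_fun_on_mollifier_shift:
  assumes e: "\<epsilon> > 0" and ball: "cball x \<epsilon> \<subseteq> U"
  shows "test_fun_on U (\<lambda>y. mollifier \<epsilon> (x - y))"
proof -
  have "(\<lambda>y. mollifier \<epsilon> (x - y)) = (\<lambda>y. mollifier \<epsilon> ((-1) *\<^sub>R y + x))"
    by simp
  then have "smooth_fun (\<lambda>y. mollifier \<epsilon> (x - y))"
    using smooth_fun_affine[OF smooth_fun_mollifier] by metis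
  moreover have sub: "{y. mollifier \<epsilon> (x - y) \<noteq> 0} \<subseteq> cball x \<epsilon>"
    using mollifier_shift_eq_0[OF e] by blast
  then have "tsupp (\<lambda>y. mollifier \<epsilon> (x - y)) \<subseteq> cball x \<epsilon>"
    unfolding tsupp_def by (simp add: closure_minimal)
  moreover have "compact (tsupp (\<lambda>y. mollifier \<epsilon> (x - y)))"
    unfolding tsupp_def using sub bounded_subset[OF bounded_cball] compact_closure by blast
  ultimately show ?thesis
    using ball by (auto simp: test_fun_on_def)
qed

definition box_conv :: "real^'n::finite \<Rightarrow> real^'n \<Rightarrow> (real^'n \<Rightarrow> real) \<Rightarrow> (real^'n \<Rightarrow> real) \<Rightarrow> real^'n \<Rightarrow> real" where
  "box_conv a b \<eta> g x = integral (cbox a b) (\<lambda>y. \<eta> (x - y) * g y)"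

lemma box_conv_has_derivative:
  fixes \<eta> g :: "real^'n::finite \<Rightarrow> real"
  assumes eta: "smooth_fun \<eta>" and g: "continuous_on (cbox a b) g"
  shows "(box_conv a b \<eta> g has_derivative
      (\<lambda>v. integral (cbox a b) (\<lambda>y. frechet_derivative \<eta> (at (x - y)) v * g y))) (at x)"
proof -
  define fx where "fx = (\<lambda>x t. Blinfun (\<lambda>v. frechet_derivative \<eta> (at (x - t)) v * g t))"
  have "bounded_linear (\<lambda>v. frechet_derivative \<eta> (at z) v * c)" for z c
    by (rule bounded_linear_compose[OF bounded_linear_mult_left
          has_derivative_bounded_linear[OF smooth_fun_has_derivative[OF eta]]])
  then have fxa: "blinfun_apply (fx x t) = (\<lambda>v. frechet_derivative \<eta> (at (x - t)) v * g t)" for x t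
    unfolding fx_def by (rule bounded_linear_Blinfun_apply)
  have "((\<lambda>x. \<eta> (x - t) * g t) has_derivative blinfun_apply (fx x t)) (at x within UNIV)" for x t
  proof -
    have "((\<eta> \<circ> (\<lambda>x. x - t)) has_derivative (frechet_derivative \<eta> (at (x - t)) \<circ> (\<lambda>v. v))) (at x)"
      by (rule diff_chain_at) (auto intro!: derivative_eq_intros smooth_fun_has_derivative eta)
    then have "((\<lambda>x. \<eta> (x - t)) has_derivative frechet_derivative \<eta> (at (x - t))) (at x)"
      by (simp add: o_def)
    from has_derivative_mult[OF this has_derivative_const[of "g t"]]
    show ?thesis
      unfolding fxa by simp
  qed
  moreover have "(\<lambda>t. \<eta> (x - t) * g t) integrable_on cbox a b" for x
    by (intro integrable_continuous continuous_intros g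
        continuous_on_compose2[OF smooth_fun_continuous_on[OF eta, of UNIV]]) auto
  moreover have cfx: "continuous_on (UNIV \<times> cbox a b) (\<lambda>(x, t). fx x t)"
  proof (rule continuous_on_blinfun_componentwise)
    fix i :: "real^'n"
    assume "i \<in> Basis"
    then obtain j where i: "i = axis j 1"
      by (auto simp: Basis_vec_def)
    have pc: "continuous_on UNIV (pderiv_at j \<eta>)"
      by (rule smooth_fun_continuous_on[OF smooth_fun_pderiv_at[OF eta]])
    have "continuous_on (UNIV \<times> cbox a b) (\<lambda>(x,t). pderiv_at j \<eta> (x - t) * g t)"
      unfolding case_prod_beta
      by (intro continuous_intros continuous_on_compose2[OF pc] continuous_on_compose2[OF g]) auto
    moreover have "(\<lambda>x. blinfun_apply (case x of (x, t) \<Rightarrow> fx x t) i) = (\<lambda>(x,t). pderiv_at j \<eta> (x - t) * g t)"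
      by (auto simp: fxa i pderiv_at_def)
    ultimately show "continuous_on (UNIV \<times> cbox a b) (\<lambda>x. blinfun_apply (case x of (x, t) \<Rightarrow> fx x t) i)"
      by metis
  qed
  ultimately have L: "(box_conv a b \<eta> g has_derivative integral (cbox a b) (fx x)) (at x within UNIV)"
    unfolding box_conv_def by (intro leibniz_rule) auto
  have "continuous_on (cbox a b) ((\<lambda>(x, t). fx x t) \<circ> Pair x)"
    by (intro continuous_on_compose continuous_intros continuous_on_subset[OF cfx]) auto
  then have "fx x integrable_on cbox a b"
    by (simp add: o_def integrable_continuous)
  then have "blinfun_apply (integral (cbox a b) (fx x))
      = (\<lambda>v. integral (cbox a b) (\<lambda>y. frechet_derivative \<eta> (at (x - y)) v * g y))"
    by (intro ext) (simp add: blinfun_apply_integral fxa)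
  with L show ?thesis
    by simp
qed

lemma pderiv_box_conv:
  assumes "smooth_fun \<eta>" "continuous_on (cbox a b) g"
  shows "pderiv_at i (box_conv a b \<eta> g) = box_conv a b (pderiv_at i \<eta>) g"
  by (rule ext, subst pderiv_at_eq[OF box_conv_has_derivative[OF assms]])
    (simp add: box_conv_def pderiv_at_def)

lemma smooth_fun_box_conv:
  assumes "smooth_fun \<eta>" "continuous_on (cbox a b) g"
  shows "smooth_fun (box_conv a b \<eta> g)"
proof (rule smooth_funI_pderiv_closed[where P="{box_conv a b \<eta> g | \<eta>. smooth_fun \<eta>}"])
  fix f
  assume "f \<in> {box_conv a b \<eta> g | \<eta>. smooth_fun \<eta>}"
  then obtain \<eta> where f: "f = box_conv a b \<eta> g" and e: "smooth_fun \<eta>"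
    by auto
  show "(\<forall>x. f differentiable at x) \<and> (\<forall>i. pderiv_at i f \<in> {box_conv a b \<eta> g | \<eta>. smooth_fun \<eta>})"
    using box_conv_has_derivative[OF e assms(2)] pderiv_box_conv[OF e assms(2)] smooth_fun_pderiv_at[OF e]
    unfolding f by (auto intro: differentiableI)
qed (use assms in auto)

lemma box_conv_mollifier_approx:
  fixes g :: "real^'n::finite \<Rightarrow> real"
  assumes e: "\<epsilon> > 0" and g: "continuous_on UNIV g" and z: "\<And>y. y \<notin> cbox a b \<Longrightarrow> g y = 0"
    and L: "\<And>x y. \<bar>g y - g x\<bar> \<le> L * norm (y - x)" and L0: "L \<ge> 0"
  shows "\<bar>box_conv a b (mollifier \<epsilon>) g x - g x\<bar> \<le> L * \<epsilon>"
proof -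
  let ?m = "\<lambda>y. mollifier \<epsilon> (x - y)"
  have im: "integrable lborel ?m"
    using continuous_on_mollifier_shift mollifier_shift_eq_0[OF e]
    by (intro integrable_lborel_compact_support[where K="cball x \<epsilon>"]) auto
  have ig: "integrable lborel (\<lambda>y. ?m y * g y)"
    using z by (intro integrable_lborel_compact_support[where K="cbox a b"]
        continuous_intros continuous_on_mollifier_shift g) auto
  have "box_conv a b (mollifier \<epsilon>) g x = integral\<^sup>L lborel (\<lambda>y. ?m y * g y)"
    unfolding box_conv_def using z
    by (intro integral_cbox_eq_lborel_compact_support[where K="cbox a b"]
        continuous_intros continuous_on_mollifier_shift g) auto
  then have "box_conv a b (mollifier \<epsilon>) g x - g x
      = integral\<^sup>L lborel (\<lambda>y. ?m y * g y) - integral\<^sup>L lborel (\<lambda>y. ?m y * g x)"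
    using integral_lborel_mollifier_shift[OF e, of x] by simp
  also have "\<dots> = integral\<^sup>L lborel (\<lambda>y. ?m y * (g y - g x))"
    using im ig by (simp add: right_diff_distrib)
  finally have eq: "box_conv a b (mollifier \<epsilon>) g x - g x = integral\<^sup>L lborel (\<lambda>y. ?m y * (g y - g x))" .
  have "\<bar>integral\<^sup>L lborel (\<lambda>y. ?m y * (g y - g x))\<bar> \<le> integral\<^sup>L lborel (\<lambda>y. ?m y * (L * \<epsilon>))"
  proof (rule integral_abs_bound_integral)
    show "integrable lborel (\<lambda>y. ?m y * (g y - g x))"
      using im ig by (simp add: right_diff_distrib)
    show "integrable lborel (\<lambda>y. ?m y * (L * \<epsilon>))"
      using im by simp
    fix y :: "real^'n"
    show "\<bar>?m y * (g y - g x)\<bar> \<le> ?m y * (L * \<epsilon>)"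
    proof (cases "?m y = 0")
      case False
      then have "norm (y - x) \<le> \<epsilon>"
        using norm_less_if_mollifier_nonzero[OF e] by (force simp: norm_minus_commute)
      then have "L * norm (y - x) \<le> L * \<epsilon>"
        using L0 by (rule mult_left_mono)
      then have "\<bar>g y - g x\<bar> \<le> L * \<epsilon>"
        using L order_trans by blast
      then show ?thesis
        using mollifier_nonneg[OF e, of "x - y"] by (simp add: abs_mult mult_left_mono)
    qed simp
  qed
  also have "\<dots> = L * \<epsilon>"
    using integral_lborel_mollifier_shift[OF e, of x] by simp
  finally show ?thesis
    using eq by simp
qed

lemma set_integrable_mollifier_scaleR:
  fixes F :: "real^'n::finite \<Rightarrow> 'b::{banach, second_countable_topology}"
  assumes e: "\<epsilon> > 0" and F: "set_integrable lebesgue (cball x \<epsilon>) F" and ball: "cball x \<epsilon> \<subseteq> \<Omega>"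
  shows "set_integrable lebesgue \<Omega> (\<lambda>y. mollifier \<epsilon> (x - y) *\<^sub>R F y)"
proof -
  obtain B where B: "\<And>z::real^'n. norm (mollifier \<epsilon> z) \<le> B"
    using bounded_range_compact_support[OF continuous_on_mollifier compact_cball, of 0 \<epsilon>]
      norm_less_if_mollifier_nonzero[OF e] by (force simp: dist_norm)
  have "(\<lambda>y. indicator (cball x \<epsilon>) y *\<^sub>R F y) \<in> borel_measurable lebesgue"
    using F unfolding set_integrable_def by (rule borel_measurable_integrable)
  moreover have "(\<lambda>y. mollifier \<epsilon> (x - y)) \<in> borel_measurable lebesgue"
    using continuous_imp_measurable_on_sets_lebesgue[OF continuous_on_mollifier_shift, of UNIV]
    unfolding lebesgue_on_UNIV_eq by simp
  ultimately have "(\<lambda>y. mollifier \<epsilon> (x - y) *\<^sub>R (indicator (cball x \<epsilon>) y *\<^sub>R F y)) \<in> borel_measurable lebesgue"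
    by (rule borel_measurable_scaleR[rotated])
  moreover have "(\<lambda>y. mollifier \<epsilon> (x - y) *\<^sub>R (indicator (cball x \<epsilon>) y *\<^sub>R F y))
      = (\<lambda>y. indicator \<Omega> y *\<^sub>R (mollifier \<epsilon> (x - y) *\<^sub>R F y))"
    using mollifier_shift_eq_0[OF e] ball by (auto simp: indicator_def fun_eq_iff)
  ultimately have meas: "(\<lambda>y. indicator \<Omega> y *\<^sub>R (mollifier \<epsilon> (x - y) *\<^sub>R F y)) \<in> borel_measurable lebesgue"
    by simp
  have "B \<ge> 0"
    using B[of 0] norm_ge_zero order_trans by blast
  have bound: "norm (indicator \<Omega> y *\<^sub>R (mollifier \<epsilon> (x - y) *\<^sub>R F y))
      \<le> norm (B *\<^sub>R (indicator (cball x \<epsilon>) y *\<^sub>R F y))" for y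
  proof (cases "y \<in> cball x \<epsilon>")
    case True
    then show ?thesis
      using ball B[of "x - y"] \<open>B \<ge> 0\<close> by (auto simp: indicator_def intro!: mult_right_mono)
  next
    case False
    then show ?thesis
      by (simp add: mollifier_shift_eq_0[OF e])
  qed
  have "integrable lebesgue (\<lambda>y. B *\<^sub>R (indicator (cball x \<epsilon>) y *\<^sub>R F y))"
    using F unfolding set_integrable_def by (rule integrable_scaleR_right)
  then show ?thesis
    unfolding set_integrable_def by (rule Bochner_Integration.integrable_bound[OF _ meas AE_I2[OF bound]])
qed

lemma set_integral_vec_nth_nth:
  fixes F :: "'a \<Rightarrow> real^'n::finite^'k::finite"
  assumes "set_integrable M S F"
  shows "(LINT y:S|M. F y) $ k $ i = (LINT y:S|M. F y $ k $ i)"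
proof -
  have "bounded_linear (\<lambda>A::real^'n^'k. A $ k $ i)"
    by (rule bounded_linear_compose[OF bounded_linear_vec_nth bounded_linear_vec_nth])
  from integral_bounded_linear[OF this assms[unfolded set_integrable_def]]
  show ?thesis
    by (simp add: set_lebesgue_integral_def)
qed

text \<open>Integrating by parts against the test function \<open>y \<mapsto> mollifier \<epsilon> (x - y)\<close> moves the
  derivative of the mollified \<open>w\<close> onto \<open>w\<close>, provided the \<open>\<epsilon>\<close>-ball around \<open>x\<close> stays inside \<open>\<Omega>\<close>.\<close>

lemma pderiv_box_conv_mollifier:
  fixes w :: "real^'n::finite \<Rightarrow> real^'k::finite" and Dw :: "real^'n \<Rightarrow> real^'n^'k"
  assumes Dw: "weak_deriv_on \<Omega> w Dw" and e: "\<epsilon> > 0" and ball: "cball x \<epsilon> \<subseteq> \<Omega>"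
    and box: "\<Omega> \<subseteq> cbox a b" and wc: "continuous_on UNIV w" and wz: "\<And>y. y \<notin> \<Omega> \<Longrightarrow> w y = 0"
  shows "pderiv_at i (box_conv a b (mollifier \<epsilon>) (\<lambda>y. w y $ k)) x
    = conv_on \<Omega> (mollifier \<epsilon>) Dw x $ k $ i"
proof -
  let ?g = "\<lambda>y. w y $ k"
  let ?\<phi> = "\<lambda>y. mollifier \<epsilon> (x - y)"
  have gc: "continuous_on UNIV ?g"
    by (intro continuous_intros wc)
  have pmc: "continuous_on UNIV (pderiv_at i (mollifier \<epsilon>))"
    by (rule smooth_fun_continuous_on[OF smooth_fun_pderiv_at[OF smooth_fun_mollifier]])
  have "pderiv_at i (box_conv a b (mollifier \<epsilon>) ?g) x = box_conv a b (pderiv_at i (mollifier \<epsilon>)) ?g x"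
    by (subst pderiv_box_conv[OF smooth_fun_mollifier continuous_on_subset[OF gc]]) auto
  also have "\<dots> = integral\<^sup>L lebesgue (\<lambda>y. pderiv_at i (mollifier \<epsilon>) (x - y) * ?g y)"
  proof -
    have c: "continuous_on UNIV (\<lambda>y. pderiv_at i (mollifier \<epsilon>) (x - y) * ?g y)"
      by (intro continuous_intros continuous_on_compose2[OF pmc] gc) auto
    have z: "\<And>y. y \<notin> cbox a b \<Longrightarrow> pderiv_at i (mollifier \<epsilon>) (x - y) * ?g y = 0"
      using box wz by (metis mult_zero_right subsetD zero_index)
    show ?thesis
      unfolding box_conv_def
      using integral_cbox_eq_lborel_compact_support[OF c compact_cbox z subset_refl]
        integral_lebesgue_eq_lborel_compact_support[OF c compact_cbox z] by simp
  qed
  also have "\<dots> = - (\<integral>y\<in>\<Omega>. w y $ k * pderiv_at i ?\<phi> y \<partial>lebesgue)"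
  proof -
    have "?\<phi> = (\<lambda>y. mollifier \<epsilon> ((-1) *\<^sub>R y + x))"
      by simp
    then have "pderiv_at i ?\<phi> = (\<lambda>y. - pderiv_at i (mollifier \<epsilon>) (x - y))"
      using pderiv_at_affine(1)[OF smooth_fun_mollifier, where i=i and c="-1" and b=x] by simp
    then show ?thesis
      unfolding set_lebesgue_integral_def
      by (simp, intro Bochner_Integration.integral_cong) (auto simp: indicator_def wz)
  qed
  also have "\<dots> = (\<integral>y\<in>\<Omega>. Dw y $ k $ i * ?\<phi> y \<partial>lebesgue)"
    using Dw test_fun_on_mollifier_shift[OF e ball] unfolding weak_deriv_on_def by simp
  also have "\<dots> = conv_on \<Omega> (mollifier \<epsilon>) Dw x $ k $ i"
  proof -
    have "set_integrable lebesgue (cball x \<epsilon>) Dw"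
      using Dw ball unfolding weak_deriv_on_def by auto
    from set_integral_vec_nth_nth[OF set_integrable_mollifier_scaleR[OF e this ball]]
    show ?thesis
      unfolding conv_on_def by (simp add: mult.commute)
  qed
  finally show ?thesis .
qed

lemma norm_matrix_squared: "(norm (M :: real^'n::finite^'k::finite))\<^sup>2 = (\<Sum>k\<in>UNIV. \<Sum>i\<in>UNIV. (M $ k $ i)\<^sup>2)"
  by (simp only: power2_norm_eq_inner) (simp add: inner_vec_def power2_eq_square)

lemma smooth_fun_box_conv_mollifier_component:
  fixes w :: "real^'n::finite \<Rightarrow> real^'k::finite"
  assumes "continuous_on UNIV w"
  shows "smooth_fun (box_conv a b (mollifier \<epsilon>) (\<lambda>y. w y $ k))"
proof -
  have "continuous_on (cbox a b) (\<lambda>y. w y $ k)"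
    using continuous_on_subset[OF assms] by (intro continuous_intros) auto
  then show ?thesis
    by (rule smooth_fun_box_conv[OF smooth_fun_mollifier])
qed

lemma box_conv_mollifier_lipschitz_approx:
  fixes w :: "real^'n::finite \<Rightarrow> real^'k::finite"
  assumes e: "\<epsilon> > 0" and lip: "L-lipschitz_on UNIV w" and z: "\<And>y. y \<notin> cbox a b \<Longrightarrow> w y = 0"
  shows "\<bar>box_conv a b (mollifier \<epsilon>) (\<lambda>y. w y $ k) x - w x $ k\<bar> \<le> L * \<epsilon>"
proof (rule box_conv_mollifier_approx[OF e])
  show "continuous_on UNIV (\<lambda>y. w y $ k)"
    using lipschitz_on_continuous_on[OF lip] by (intro continuous_intros)
  show "\<bar>w y $ k - w x $ k\<bar> \<le> L * norm (y - x)" for x y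
    using component_le_norm_cart[of "w y - w x" k] lipschitz_onD[OF lip, of y x]
    by (simp add: dist_norm)
qed (use z lipschitz_on_nonneg[OF lip] in auto)

text \<open>Near \<open>K\<close> the derivatives of the mollified \<open>w\<close> are the mollifications of \<open>Dw\<close>, so \<open>rep0\<close>
  applies to them.\<close>

lemma pderiv_box_conv_mollifier_L2_tendsto_0:
  fixes w :: "real^'n::finite \<Rightarrow> real^'k::finite" and Dw :: "real^'n \<Rightarrow> real^'n^'k"
  assumes Dw: "weak_deriv_on \<Omega> w Dw" and rep0: "is_local_L2_rep \<mu> \<Omega> Dw (\<lambda>x. 0)"
    and K: "compact K" and d: "d > 0" "\<And>x. x \<in> K \<Longrightarrow> cball x d \<subseteq> \<Omega>"
    and box: "\<Omega> \<subseteq> cbox a b" and wc: "continuous_on UNIV w" and wz: "\<And>y. y \<notin> \<Omega> \<Longrightarrow> w y = 0"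
  shows "((\<lambda>\<epsilon>. \<integral>x\<in>K. (\<Sum>i\<in>UNIV. \<Sum>k\<in>UNIV.
      (pderiv_at i (box_conv a b (mollifier \<epsilon>) (\<lambda>y. w y $ k)) x)\<^sup>2) \<partial>\<mu>) \<longlongrightarrow> 0) (at_right 0)"
proof -
  have "K \<subseteq> \<Omega>"
    using d by force
  then have "((\<lambda>\<epsilon>. \<integral>x\<in>K. (norm (0 - conv_on \<Omega> (mollifier \<epsilon>) Dw x))\<^sup>2 \<partial>\<mu>) \<longlongrightarrow> 0) (at_right 0)"
    using rep0 K test_fun_on_std_mollifier integral_lebesgue_std_mollifier
    unfolding is_local_L2_rep_def by blast
  moreover have "\<forall>\<^sub>F \<epsilon> in at_right 0. (\<integral>x\<in>K. (norm (0 - conv_on \<Omega> (mollifier \<epsilon>) Dw x))\<^sup>2 \<partial>\<mu>)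
      = (\<integral>x\<in>K. (\<Sum>i\<in>UNIV. \<Sum>k\<in>UNIV. (pderiv_at i (box_conv a b (mollifier \<epsilon>) (\<lambda>y. w y $ k)) x)\<^sup>2) \<partial>\<mu>)"
    using eventually_at_right_real[OF d(1)]
  proof eventually_elim
    fix \<epsilon>
    assume "\<epsilon> \<in> {0<..<d}"
    then have e: "0 < \<epsilon>" "\<epsilon> < d"
      by auto
    have "(norm (0 - conv_on \<Omega> (mollifier \<epsilon>) Dw x))\<^sup>2
        = (\<Sum>i\<in>UNIV. \<Sum>k\<in>UNIV. (pderiv_at i (box_conv a b (mollifier \<epsilon>) (\<lambda>y. w y $ k)) x)\<^sup>2)" if "x \<in> K" for x
    proof -
      have "cball x \<epsilon> \<subseteq> \<Omega>"
        using d(2)[OF that] e by force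
      then have pd: "pderiv_at i (box_conv a b (mollifier \<epsilon>) (\<lambda>y. w y $ k)) x
          = conv_on \<Omega> (mollifier \<epsilon>) Dw x $ k $ i" for i k
        using pderiv_box_conv_mollifier[OF Dw e(1) _ box wc wz] by blast
      have "(norm (0 - conv_on \<Omega> (mollifier \<epsilon>) Dw x))\<^sup>2
          = (\<Sum>k\<in>UNIV. \<Sum>i\<in>UNIV. (conv_on \<Omega> (mollifier \<epsilon>) Dw x $ k $ i)\<^sup>2)"
        by (simp add: norm_matrix_squared)
      also have "\<dots> = (\<Sum>i\<in>UNIV. \<Sum>k\<in>UNIV. (conv_on \<Omega> (mollifier \<epsilon>) Dw x $ k $ i)\<^sup>2)"
        by (rule sum.swap)
      finally show ?thesis
        by (simp only: pd)
    qed
    then show "(\<integral>x\<in>K. (norm (0 - conv_on \<Omega> (mollifier \<epsilon>) Dw x))\<^sup>2 \<partial>\<mu>)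
        = (\<integral>x\<in>K. (\<Sum>i\<in>UNIV. \<Sum>k\<in>UNIV. (pderiv_at i (box_conv a b (mollifier \<epsilon>) (\<lambda>y. w y $ k)) x)\<^sup>2) \<partial>\<mu>)"
      unfolding set_lebesgue_integral_def by (intro Bochner_Integration.integral_cong) (auto simp: indicator_def)
  qed
  ultimately show ?thesis
    by (rule Lim_transform_eventually)
qed

section \<open>Stationary joint masses\<close>

lemma abs_frechet_derivative_le:
  fixes f :: "real^'n::finite \<Rightarrow> real"
  assumes "f differentiable (at x)"
  shows "\<bar>frechet_derivative f (at x) v\<bar> \<le> norm v * (\<Sum>i\<in>UNIV. \<bar>pderiv_at i f x\<bar>)"
proof -
  have "\<bar>frechet_derivative f (at x) v\<bar> \<le> (\<Sum>i\<in>UNIV. \<bar>v $ i * pderiv_at i f x\<bar>)"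
    unfolding frechet_derivative_eq_sum_pderiv_at[OF assms] by (rule sum_abs)
  also have "\<dots> \<le> (\<Sum>i\<in>UNIV. norm v * \<bar>pderiv_at i f x\<bar>)"
    by (intro sum_mono) (simp add: abs_mult component_le_norm_cart mult_right_mono)
  finally show ?thesis
    by (simp add: sum_distrib_left)
qed

lemma frechet_derivative_eq_0_outside:
  assumes K: "closed K" and f: "f differentiable (at x)" and x: "x \<notin> K"
    and zero: "\<And>y. y \<notin> K \<Longrightarrow> f y = 0"
  shows "frechet_derivative f (at x) = (\<lambda>v. 0)"
proof -
  have "(f has_derivative (\<lambda>v. 0)) (at x)"
    using K x zero by (intro has_derivative_transform_within_open[OF has_derivative_const, of "-K"]) auto
  then show ?thesis
    by (rule frechet_derivative_at[symmetric])
qed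

lemma frechet_derivative_radial_field:
  fixes s :: "real^'n::finite \<Rightarrow> real"
  assumes "smooth_fun s"
  shows "frechet_derivative (\<lambda>x. s x *\<^sub>R x) (at x) = (\<lambda>v. s x *\<^sub>R v + frechet_derivative s (at x) v *\<^sub>R x)"
proof -
  have "((\<lambda>x. s x *\<^sub>R x) has_derivative (\<lambda>v. s x *\<^sub>R v + frechet_derivative s (at x) v *\<^sub>R x)) (at x)"
    using has_derivative_scaleR[OF smooth_fun_has_derivative[OF assms] has_derivative_ident] by simp
  then show ?thesis
    by (rule frechet_derivative_at[symmetric])
qed

lemma test_fun_on_radial_field:
  fixes s :: "real^'n::finite \<Rightarrow> real"
  assumes s: "smooth_fun s" and K: "compact K" "K \<subseteq> U" and zero: "\<And>x. x \<notin> K \<Longrightarrow> s x = 0"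
  shows "test_fun_on U (\<lambda>x. s x *\<^sub>R x)"
proof -
  have "tsupp (\<lambda>x. s x *\<^sub>R x) \<subseteq> K"
    unfolding tsupp_def using zero compact_imp_closed[OF K(1)] by (intro closure_minimal) auto
  moreover have "compact (K \<inter> tsupp (\<lambda>x. s x *\<^sub>R x))"
    using K(1) by (rule compact_Int_closed) (simp add: tsupp_def)
  ultimately show ?thesis
    using smooth_fun_scaleR_id[OF s] K(2) by (auto simp: test_fun_on_def Int_absorb1)
qed

lemma integrable_bounded_by_indicator:
  fixes f :: "'a \<Rightarrow> real"
  assumes "f \<in> borel_measurable M" "K \<in> sets M" "emeasure M K < \<infinity>"
    and "AE x in M. \<bar>f x\<bar> \<le> B * indicator K x"
  shows "integrable M f"
proof (rule Bochner_Integration.integrable_bound)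
  show "integrable M (\<lambda>x. B * indicator K x)"
    using assms by (intro integrable_mult_right integrable_real_indicator) auto
  show "AE x in M. norm (f x) \<le> norm (B * indicator K x)"
    using assms(4) by eventually_elim auto
qed fact

lemma abs_le_amgm: "t > 0 \<Longrightarrow> \<bar>p::real\<bar> \<le> t + p\<^sup>2 / (4 * t)"
proof -
  assume t: "t > 0"
  have "0 \<le> (\<bar>p\<bar> - 2 * t)\<^sup>2"
    by simp
  then have "4 * t * \<bar>p\<bar> \<le> p\<^sup>2 + 4 * t\<^sup>2"
    by (simp add: power2_eq_square algebra_simps)
  then show ?thesis
    using t by (simp add: field_simps power2_eq_square)
qed

lemma compact_superlevel_set:
  fixes w :: "'a::euclidean_space \<Rightarrow> 'b::real_normed_vector"
  assumes "bounded \<Omega>" "continuous_on UNIV w" "\<And>x. x \<notin> \<Omega> \<Longrightarrow> w x = 0" "c > 0"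
  shows "{y. c \<le> norm (w y)} \<subseteq> \<Omega>" "compact {y. c \<le> norm (w y)}"
proof -
  show sub: "{y. c \<le> norm (w y)} \<subseteq> \<Omega>"
    using assms(3,4) by force
  have "closed {y. c \<le> norm (w y)}"
    using assms(2) by (intro closed_Collect_le continuous_intros)
  then show "compact {y. c \<le> norm (w y)}"
    using bounded_subset[OF assms(1) sub] by (simp add: compact_eq_bounded_closed)
qed

lemma eventually_mult_less_at_right_0: "b > 0 \<Longrightarrow> \<forall>\<^sub>F \<epsilon> in at_right 0. c * \<epsilon> < (b::real)"
  using order_tendstoD(2)[OF tendsto_mult_right_zero[OF tendsto_ident_at]] by blast

lemma nonpos_if_le_linear: "(\<And>t. t > 0 \<Longrightarrow> X \<le> c * t) \<Longrightarrow> c \<ge> 0 \<Longrightarrow> (X::real) \<le> 0"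
proof (rule ccontr)
  assume le: "\<And>t. t > 0 \<Longrightarrow> X \<le> c * t" and c: "c \<ge> 0" and "\<not> X \<le> 0"
  then have "X / (2 * (c + 1)) > 0"
    by simp
  from le[OF this] have "X * c + 2 * X \<le> 0"
    using c by (simp add: field_simps)
  then show False
    using \<open>\<not> X \<le> 0\<close> c mult_nonneg_nonneg[of X c] by linarith
qed

lemma sum_squares_bounds_if_close:
  fixes U v :: "real^'j::finite" and \<eta> \<delta> :: real
  assumes close: "\<And>j. \<bar>U $ j - v $ j\<bar> \<le> \<eta>" and \<eta>: "CARD('j) * \<eta> \<le> \<delta> / 4" and \<delta>: "\<delta> > 0"
  shows "norm v < \<delta> / 2 \<Longrightarrow> (\<Sum>j\<in>UNIV. (U $ j)\<^sup>2) < \<delta>\<^sup>2"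
    and "2 * \<delta> \<le> norm v \<Longrightarrow> 2 * \<delta>\<^sup>2 \<le> (\<Sum>j\<in>UNIV. (U $ j)\<^sup>2)"
proof -
  have sq: "(\<Sum>j\<in>UNIV. (U $ j)\<^sup>2) = (norm U)\<^sup>2"
    by (simp only: power2_norm_eq_inner) (simp add: inner_vec_def power2_eq_square)
  have "norm (U - v) \<le> (\<Sum>j\<in>UNIV. \<bar>(U - v) $ j\<bar>)"
    by (rule norm_le_l1_cart)
  also have "\<dots> \<le> CARD('j) * \<eta>"
    using sum_bounded_above[of UNIV "\<lambda>j. \<bar>(U - v) $ j\<bar>" \<eta>] close by simp
  finally have d: "norm (U - v) \<le> \<delta> / 4"
    using \<eta> by linarith
  show "(\<Sum>j\<in>UNIV. (U $ j)\<^sup>2) < \<delta>\<^sup>2" if "norm v < \<delta> / 2"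
  proof -
    have "norm U < \<delta>"
      using d that norm_triangle_ineq[of "U - v" v] \<delta> by simp
    then show ?thesis
      unfolding sq by (simp add: power_strict_mono)
  qed
  show "2 * \<delta>\<^sup>2 \<le> (\<Sum>j\<in>UNIV. (U $ j)\<^sup>2)" if "2 * \<delta> \<le> norm v"
  proof -
    have "norm v \<le> norm U + norm (U - v)"
      using norm_triangle_ineq[of U "v - U"] by (simp add: norm_minus_commute)
    then have "7 / 4 * \<delta> \<le> norm U"
      using that d by linarith
    then have "(7 / 4 * \<delta>)\<^sup>2 \<le> (norm U)\<^sup>2"
      using \<delta> by (intro power_mono) auto
    moreover have "2 * \<delta>\<^sup>2 \<le> (7 / 4 * \<delta>)\<^sup>2"
      by (simp add: power2_eq_square)
    ultimately show ?thesis
      unfolding sq by linarith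
  qed
qed

locale stationary_mass =
  fixes \<Omega> :: "(real^'n::finite) set" and \<mu> :: "(real^'n) measure"
    and V :: "'k::finite \<Rightarrow> real^'n \<Rightarrow> real^'n"
  assumes open_domain: "open \<Omega>"
    and sets_eq_borel: "sets \<mu> = sets borel"
    and finite_on_compact: "\<And>K. compact K \<Longrightarrow> emeasure \<mu> K < \<infinity>"
    and measurable_V: "\<And>k. V k \<in> borel_measurable \<mu>"
    and unit_V: "AE x in \<mu>. (\<Sum>k\<in>UNIV. (norm (V k x))\<^sup>2) = 1"
    and stationary: "\<And>\<psi>::real^'n \<Rightarrow> real^'n. test_fun_on \<Omega> \<psi> \<Longrightarrow>
      (\<Sum>k\<in>UNIV. (\<integral>x\<in>\<Omega>. V k x \<bullet> frechet_derivative \<psi> (at x) (V k x) \<partial>\<mu>)) = 0"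
begin

lemma space_eq_UNIV: "space \<mu> = UNIV"
  using sets_eq_imp_space_eq[OF sets_eq_borel] by simp

lemma borel_measurable_continuous: "continuous_on UNIV f \<Longrightarrow> f \<in> borel_measurable \<mu>"
  using borel_measurable_continuous_onI measurable_cong_sets[OF sets_eq_borel refl] by blast

lemma closed_in_sets: "closed K \<Longrightarrow> K \<in> sets \<mu>"
  using sets_eq_borel borel_closed by auto

lemma AE_norm_V_le_1: "AE x in \<mu>. \<forall>k. norm (V k x) \<le> 1"
  using unit_V
proof eventually_elim
  fix x
  assume sum: "(\<Sum>k\<in>UNIV. (norm (V k x))\<^sup>2) = 1"
  show "\<forall>k. norm (V k x) \<le> 1"
  proof
    fix k
    have "(norm (V k x))\<^sup>2 \<le> (\<Sum>k\<in>UNIV. (norm (V k x))\<^sup>2)"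
      by (rule member_le_sum) auto
    then show "norm (V k x) \<le> 1"
      using sum by (simp add: power2_le_imp_le abs_square_le_1)
  qed
qed

lemma integrable_indicator_times_continuous:
  fixes f :: "real^'n \<Rightarrow> real"
  assumes "continuous_on UNIV f" "compact K"
  shows "integrable \<mu> (\<lambda>x. indicator K x * f x)"
proof -
  have "bounded (f ` K)"
    using assms by (meson compact_continuous_image compact_imp_bounded continuous_on_subset subset_UNIV)
  then obtain B where B: "\<forall>y\<in>f ` K. norm y \<le> B"
    by (auto simp: bounded_iff)
  show ?thesis
  proof (rule integrable_bounded_by_indicator[where B=B])
    show "(\<lambda>x. indicator K x * f x) \<in> borel_measurable \<mu>"
      using closed_in_sets[OF compact_imp_closed[OF assms(2)]] borel_measurable_continuous[OF assms(1)]
      by (intro borel_measurable_times borel_measurable_indicator) auto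
    show "K \<in> sets \<mu>" "emeasure \<mu> K < \<infinity>"
      using assms(2) closed_in_sets compact_imp_closed finite_on_compact by auto
    show "AE x in \<mu>. \<bar>indicator K x * f x\<bar> \<le> B * indicator K x"
      by (rule AE_I2) (use B in \<open>auto simp: indicator_def\<close>)
  qed
qed

lemma set_integrable_continuous:
  fixes f :: "real^'n \<Rightarrow> real"
  shows "continuous_on UNIV f \<Longrightarrow> compact K \<Longrightarrow> set_integrable \<mu> K f"
  using integrable_indicator_times_continuous by (simp add: set_integrable_def)

lemma integrable_if_V_bounded:
  fixes f h :: "real^'n \<Rightarrow> real"
  assumes f: "f \<in> borel_measurable \<mu>" and h: "continuous_on UNIV h" and K: "compact K"
    and bound: "\<And>x. \<forall>k. norm (V k x) \<le> 1 \<Longrightarrow> \<bar>f x\<bar> \<le> indicator K x * h x"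
  shows "integrable \<mu> f"
proof (rule Bochner_Integration.integrable_bound[OF integrable_indicator_times_continuous[OF h K] f])
  show "AE x in \<mu>. norm (f x) \<le> norm (indicator K x * h x)"
    using AE_norm_V_le_1 by eventually_elim (use bound in force)
qed

lemma borel_measurable_frechet_derivative_V:
  fixes s :: "real^'n \<Rightarrow> real"
  assumes "smooth_fun s"
  shows "(\<lambda>x. frechet_derivative s (at x) (V k x)) \<in> borel_measurable \<mu>"
proof -
  have "(\<lambda>x. V k x $ i) \<in> borel_measurable \<mu>" for i
    by (rule measurable_compose[OF measurable_V borel_measurable_continuous_onI]) (intro continuous_intros)
  moreover have "(\<lambda>x. pderiv_at i s x) \<in> borel_measurable \<mu>" for i
    using assms by (intro borel_measurable_continuous smooth_fun_continuous_on smooth_fun_pderiv_at)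
  moreover have "(\<lambda>x. frechet_derivative s (at x) (V k x)) = (\<lambda>x. \<Sum>i\<in>UNIV. V k x $ i * pderiv_at i s x)"
    using frechet_derivative_eq_sum_pderiv_at[OF smooth_fun_differentiable[OF assms]] by blast
  ultimately show ?thesis
    by (simp add: borel_measurable_sum borel_measurable_times)
qed

lemma radial_term_bound:
  fixes s :: "real^'n \<Rightarrow> real"
  assumes s: "smooth_fun s" and K: "closed K" and zero: "\<And>x. x \<notin> K \<Longrightarrow> s x = 0"
  shows "AE x in \<mu>. \<bar>frechet_derivative s (at x) (V k x) * (V k x \<bullet> x)\<bar>
    \<le> indicator K x * ((\<Sum>i\<in>UNIV. \<bar>pderiv_at i s x\<bar>) * norm x)"
  using AE_norm_V_le_1
proof eventually_elim
  fix x
  let ?g = "\<Sum>i\<in>UNIV. \<bar>pderiv_at i s x\<bar>"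
  assume V: "\<forall>k. norm (V k x) \<le> 1"
  have "\<bar>frechet_derivative s (at x) (V k x) * (V k x \<bullet> x)\<bar> \<le> (norm (V k x) * ?g) * (norm (V k x) * norm x)"
    unfolding abs_mult
    by (intro mult_mono abs_frechet_derivative_le smooth_fun_differentiable s Cauchy_Schwarz_ineq2)
      (auto intro: sum_nonneg)
  also have "\<dots> \<le> ?g * norm x"
    using V by (intro mult_mono mult_left_le_one_le) (auto intro: sum_nonneg)
  finally show "\<bar>frechet_derivative s (at x) (V k x) * (V k x \<bullet> x)\<bar> \<le> indicator K x * (?g * norm x)"
    using frechet_derivative_eq_0_outside[OF K smooth_fun_differentiable[OF s] _ zero, of x]
    by (auto simp: indicator_def)
qed

lemma integrable_radial_term:
  fixes s :: "real^'n \<Rightarrow> real"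
  assumes s: "smooth_fun s" and K: "compact K" and zero: "\<And>x. x \<notin> K \<Longrightarrow> s x = 0"
  shows "integrable \<mu> (\<lambda>x. frechet_derivative s (at x) (V k x) * (V k x \<bullet> x))"
proof (rule Bochner_Integration.integrable_bound)
  show "integrable \<mu> (\<lambda>x. indicator K x * ((\<Sum>i\<in>UNIV. \<bar>pderiv_at i s x\<bar>) * norm x))"
    using s K by (intro integrable_indicator_times_continuous continuous_intros smooth_fun_continuous_on
        smooth_fun_pderiv_at)
  show "(\<lambda>x. frechet_derivative s (at x) (V k x) * (V k x \<bullet> x)) \<in> borel_measurable \<mu>"
    by (intro borel_measurable_times borel_measurable_frechet_derivative_V s
        borel_measurable_inner measurable_V borel_measurable_continuous continuous_on_id)
  show "AE x in \<mu>. norm (frechet_derivative s (at x) (V k x) * (V k x \<bullet> x))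
      \<le> norm (indicator K x * ((\<Sum>i\<in>UNIV. \<bar>pderiv_at i s x\<bar>) * norm x))"
  proof -
    have "AE x in \<mu>. \<bar>frechet_derivative s (at x) (V k x) * (V k x \<bullet> x)\<bar>
        \<le> indicator K x * ((\<Sum>i\<in>UNIV. \<bar>pderiv_at i s x\<bar>) * norm x)"
      using s compact_imp_closed[OF K] zero by (rule radial_term_bound)
    then show ?thesis
      by eventually_elim auto
  qed
qed

text \<open>Stationarity tested with the radial field \<open>\<psi> x = s x *\<^sub>R x\<close>; since \<open>\<Sum>\<^sub>k |V\<^sub>k|\<^sup>2 = 1\<close>,
  the part \<open>s x *\<^sub>R v\<close> of its derivative contributes exactly \<open>\<integral> s d\<mu>\<close>.\<close>

lemma stationary_radial_identity:
  fixes s :: "real^'n \<Rightarrow> real"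
  assumes s: "smooth_fun s" and K: "compact K" "K \<subseteq> \<Omega>" and zero: "\<And>x. x \<notin> K \<Longrightarrow> s x = 0"
  shows "integral\<^sup>L \<mu> s = - (\<Sum>k\<in>UNIV. integral\<^sup>L \<mu> (\<lambda>x. frechet_derivative s (at x) (V k x) * (V k x \<bullet> x)))"
proof -
  define \<psi> where "\<psi> x = s x *\<^sub>R x" for x
  define B where "B k x = frechet_derivative s (at x) (V k x) * (V k x \<bullet> x)" for k x
  have Ds0: "frechet_derivative s (at x) = (\<lambda>v. 0)" if "x \<notin> K" for x
    using frechet_derivative_eq_0_outside[OF compact_imp_closed[OF K(1)] smooth_fun_differentiable[OF s] that zero] .
  have "test_fun_on \<Omega> \<psi>"
    unfolding \<psi>_def[abs_def] using s K zero by (rule test_fun_on_radial_field)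
  then have "(\<Sum>k\<in>UNIV. (\<integral>x\<in>\<Omega>. V k x \<bullet> frechet_derivative \<psi> (at x) (V k x) \<partial>\<mu>)) = 0"
    by (rule stationary)
  moreover have "(\<integral>x\<in>\<Omega>. V k x \<bullet> frechet_derivative \<psi> (at x) (V k x) \<partial>\<mu>)
      = integral\<^sup>L \<mu> (\<lambda>x. s x * (V k x \<bullet> V k x) + B k x)" for k
    unfolding set_lebesgue_integral_def
  proof (rule Bochner_Integration.integral_cong)
    fix x
    show "indicator \<Omega> x *\<^sub>R (V k x \<bullet> frechet_derivative \<psi> (at x) (V k x)) = s x * (V k x \<bullet> V k x) + B k x"
    proof (cases "x \<in> \<Omega>")
      case True
      then show ?thesis
        by (simp add: B_def \<psi>_def[abs_def] frechet_derivative_radial_field[OF s] inner_add_right)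
    next
      case False
      then have "x \<notin> K"
        using K(2) by auto
      then show ?thesis
        using False by (simp add: zero Ds0 B_def)
    qed
  qed simp
  moreover have int_s: "integrable \<mu> (\<lambda>x. s x * (V k x \<bullet> V k x))" for k
  proof (rule integrable_if_V_bounded[where h="\<lambda>x. \<bar>s x\<bar>", OF _ _ K(1)])
    show "(\<lambda>x. s x * (V k x \<bullet> V k x)) \<in> borel_measurable \<mu>"
      using s by (intro borel_measurable_times borel_measurable_inner measurable_V
          borel_measurable_continuous smooth_fun_continuous_on)
    show "continuous_on UNIV (\<lambda>x. \<bar>s x\<bar>)"
      using s by (intro continuous_intros smooth_fun_continuous_on)
    fix x
    assume "\<forall>k. norm (V k x) \<le> 1"
    then have "\<bar>V k x \<bullet> V k x\<bar> \<le> 1"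
      by (simp add: abs_square_le_1 power2_norm_eq_inner[symmetric])
    then show "\<bar>s x * (V k x \<bullet> V k x)\<bar> \<le> indicator K x * \<bar>s x\<bar>"
      using zero[of x] by (auto simp: indicator_def abs_mult mult_left_le)
  qed
  moreover have int_B: "integrable \<mu> (B k)" for k
    unfolding B_def[abs_def] using integrable_radial_term[OF s K(1) zero] .
  ultimately have "0 = (\<Sum>k\<in>UNIV. integral\<^sup>L \<mu> (\<lambda>x. s x * (V k x \<bullet> V k x)) + integral\<^sup>L \<mu> (B k))"
    by simp
  also have "\<dots> = integral\<^sup>L \<mu> (\<lambda>x. \<Sum>k\<in>UNIV. s x * (V k x \<bullet> V k x)) + (\<Sum>k\<in>UNIV. integral\<^sup>L \<mu> (B k))"
    using int_s by (simp add: sum.distrib)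
  also have "integral\<^sup>L \<mu> (\<lambda>x. \<Sum>k\<in>UNIV. s x * (V k x \<bullet> V k x)) = integral\<^sup>L \<mu> s"
  proof (rule integral_cong_AE)
    show "AE x in \<mu>. (\<Sum>k\<in>UNIV. s x * (V k x \<bullet> V k x)) = s x"
      using unit_V by eventually_elim (simp add: power2_norm_eq_inner sum_distrib_left[symmetric])
  qed (use int_s s in \<open>auto intro: borel_measurable_integrable borel_measurable_continuous
      smooth_fun_continuous_on\<close>)
  finally show ?thesis
    by (simp add: B_def[abs_def] eq_neg_iff_add_eq_0 add.commute)
qed

lemma stationary_radial_bound:
  fixes s :: "real^'n \<Rightarrow> real" and R :: real
  assumes s: "smooth_fun s" and K: "compact K" "K \<subseteq> \<Omega>" and zero: "\<And>x. x \<notin> K \<Longrightarrow> s x = 0"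
    and R: "\<And>x. x \<in> K \<Longrightarrow> norm x \<le> R"
  shows "integral\<^sup>L \<mu> s \<le> CARD('k) * R * (\<integral>x\<in>K. (\<Sum>i\<in>UNIV. \<bar>pderiv_at i s x\<bar>) \<partial>\<mu>)"
proof -
  let ?g = "\<lambda>x. \<Sum>i\<in>UNIV. \<bar>pderiv_at i s x\<bar>"
  let ?B = "\<lambda>k x. frechet_derivative s (at x) (V k x) * (V k x \<bullet> x)"
  have Bk: "\<bar>integral\<^sup>L \<mu> (?B k)\<bar> \<le> R * (\<integral>x\<in>K. ?g x \<partial>\<mu>)" for k
  proof -
    have "\<bar>integral\<^sup>L \<mu> (?B k)\<bar> \<le> integral\<^sup>L \<mu> (\<lambda>x. \<bar>?B k x\<bar>)"
      by (rule integral_abs_bound)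
    also have "\<dots> \<le> integral\<^sup>L \<mu> (\<lambda>x. R * (indicator K x * ?g x))"
    proof (rule integral_mono_AE)
      show "integrable \<mu> (\<lambda>x. \<bar>?B k x\<bar>)"
        using s K(1) zero by (intro integrable_abs integrable_radial_term)
      show "integrable \<mu> (\<lambda>x. R * (indicator K x * ?g x))"
        using s K(1) by (intro integrable_mult_right integrable_indicator_times_continuous continuous_intros
            smooth_fun_continuous_on smooth_fun_pderiv_at)
      have "AE x in \<mu>. \<bar>?B k x\<bar> \<le> indicator K x * (?g x * norm x)"
        using s compact_imp_closed[OF K(1)] zero by (rule radial_term_bound)
      then show "AE x in \<mu>. \<bar>?B k x\<bar> \<le> R * (indicator K x * ?g x)"
      proof eventually_elim
        fix x
        assume "\<bar>?B k x\<bar> \<le> indicator K x * (?g x * norm x)"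
        moreover have "?g x * norm x \<le> ?g x * R" if "x \<in> K"
          using R[OF that] by (intro mult_left_mono sum_nonneg) auto
        ultimately show "\<bar>?B k x\<bar> \<le> R * (indicator K x * ?g x)"
          by (cases "x \<in> K") (auto simp: indicator_def mult.commute)
      qed
    qed
    finally show ?thesis
      by (simp add: set_lebesgue_integral_def)
  qed
  have "(\<Sum>k\<in>UNIV. \<bar>integral\<^sup>L \<mu> (?B k)\<bar>) \<le> (\<Sum>k\<in>(UNIV::'k set). R * (\<integral>x\<in>K. ?g x \<partial>\<mu>))"
    by (intro sum_mono Bk)
  moreover have "integral\<^sup>L \<mu> s \<le> (\<Sum>k\<in>UNIV. \<bar>integral\<^sup>L \<mu> (?B k)\<bar>)"
  proof -
    have "integral\<^sup>L \<mu> s = - (\<Sum>k\<in>UNIV. integral\<^sup>L \<mu> (?B k))"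
      using s K zero by (rule stationary_radial_identity)
    then have "integral\<^sup>L \<mu> s \<le> \<bar>\<Sum>k\<in>UNIV. integral\<^sup>L \<mu> (?B k)\<bar>"
      by simp
    also have "\<dots> \<le> (\<Sum>k\<in>UNIV. \<bar>integral\<^sup>L \<mu> (?B k)\<bar>)"
      by (rule sum_abs)
    finally show ?thesis .
  qed
  ultimately show ?thesis
    by (simp add: mult.assoc)
qed

lemma set_integral_sum_abs_le:
  fixes q :: "'i::finite \<Rightarrow> 'j::finite \<Rightarrow> real^'n \<Rightarrow> real" and t :: real
  assumes cont: "\<And>i j. continuous_on UNIV (q i j)" and K: "compact K" and t: "t > 0"
  shows "(\<integral>x\<in>K. (\<Sum>i\<in>UNIV. \<Sum>j\<in>UNIV. \<bar>q i j x\<bar>) \<partial>\<mu>)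
    \<le> CARD('i) * CARD('j) * t * measure \<mu> K + (\<integral>x\<in>K. (\<Sum>i\<in>UNIV. \<Sum>j\<in>UNIV. (q i j x)\<^sup>2) \<partial>\<mu>) / (4 * t)"
proof -
  have "(\<integral>x\<in>K. (\<Sum>i\<in>UNIV. \<Sum>j\<in>UNIV. \<bar>q i j x\<bar>) \<partial>\<mu>)
      \<le> (\<integral>x\<in>K. CARD('i) * CARD('j) * t + (\<Sum>i\<in>UNIV. \<Sum>j\<in>UNIV. (q i j x)\<^sup>2) / (4 * t) \<partial>\<mu>)"
  proof (rule set_integral_mono)
    show "set_integrable \<mu> K (\<lambda>x. \<Sum>i\<in>UNIV. \<Sum>j\<in>UNIV. \<bar>q i j x\<bar>)"
      using K by (intro set_integrable_continuous continuous_intros cont)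
    show "set_integrable \<mu> K (\<lambda>x. CARD('i) * CARD('j) * t + (\<Sum>i\<in>UNIV. \<Sum>j\<in>UNIV. (q i j x)\<^sup>2) / (4 * t))"
      using t K by (intro set_integrable_continuous continuous_intros cont) auto
    have "(\<Sum>i\<in>UNIV. \<Sum>j\<in>UNIV. \<bar>q i j x\<bar>) \<le> (\<Sum>i\<in>UNIV. \<Sum>j\<in>UNIV. t + (q i j x)\<^sup>2 / (4 * t))" for x
      by (intro sum_mono abs_le_amgm t)
    then show "(\<Sum>i\<in>UNIV. \<Sum>j\<in>UNIV. \<bar>q i j x\<bar>)
        \<le> CARD('i) * CARD('j) * t + (\<Sum>i\<in>UNIV. \<Sum>j\<in>UNIV. (q i j x)\<^sup>2) / (4 * t)" for x
      by (simp add: sum.distrib sum_divide_distrib mult.assoc)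
  qed
  also have "\<dots> = (\<integral>x\<in>K. CARD('i) * CARD('j) * t \<partial>\<mu>) + (\<integral>x\<in>K. (\<Sum>i\<in>UNIV. \<Sum>j\<in>UNIV. (q i j x)\<^sup>2) \<partial>\<mu>) / (4 * t)"
    using K by (simp add: set_integral_add(2) set_integrable_continuous continuous_intros cont)
  also have "(\<integral>x\<in>K. CARD('i) * CARD('j) * t \<partial>\<mu>) = CARD('i) * CARD('j) * t * measure \<mu> K"
  proof -
    have "K \<in> sets \<mu>" "emeasure \<mu> K \<noteq> \<infinity>"
      using K finite_on_compact[OF K] closed_in_sets compact_imp_closed by auto
    then show ?thesis
      by (simp add: set_integral_const mult.commute)
  qed
  finally show ?thesis .
qed

text \<open>For every \<open>t > 0\<close>, \<open>bound\<close> and \<open>set_integral_sum_abs_le\<close> give eventually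
  \<open>X \<le> C (c t + F\<^sub>\<epsilon> / (4 t))\<close> with \<open>F\<^sub>\<epsilon>\<close> the vanishing \<open>L\<^sup>2\<close> term.\<close>

lemma nonpos_if_le_L1_of_L2_tendsto_0:
  fixes p :: "real \<Rightarrow> 'i::finite \<Rightarrow> 'j::finite \<Rightarrow> real^'n \<Rightarrow> real"
  assumes cont: "\<And>\<epsilon> i j. continuous_on UNIV (p \<epsilon> i j)" and K: "compact K" and C: "C \<ge> 0"
    and bound: "\<forall>\<^sub>F \<epsilon> in at_right 0. X \<le> C * (\<integral>x\<in>K. (\<Sum>i\<in>UNIV. \<Sum>j\<in>UNIV. \<bar>p \<epsilon> i j x\<bar>) \<partial>\<mu>)"
    and lim: "((\<lambda>\<epsilon>. \<integral>x\<in>K. (\<Sum>i\<in>UNIV. \<Sum>j\<in>UNIV. (p \<epsilon> i j x)\<^sup>2) \<partial>\<mu>) \<longlongrightarrow> 0) (at_right 0)"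
  shows "X \<le> 0"
proof (rule nonpos_if_le_linear)
  define c where "c = C * (CARD('i) * CARD('j) * measure \<mu> K)"
  show "c \<ge> 0"
    using C by (simp add: c_def)
  fix t :: real
  assume t: "t > 0"
  let ?F = "\<lambda>\<epsilon>. \<integral>x\<in>K. (\<Sum>i\<in>UNIV. \<Sum>j\<in>UNIV. (p \<epsilon> i j x)\<^sup>2) \<partial>\<mu>"
  have "((\<lambda>\<epsilon>. ?F \<epsilon> / (4 * t)) \<longlongrightarrow> 0 / (4 * t)) (at_right 0)"
    using t by (intro tendsto_divide[OF lim tendsto_const]) simp
  then have "((\<lambda>\<epsilon>. C * (CARD('i) * CARD('j) * t * measure \<mu> K + ?F \<epsilon> / (4 * t)))
      \<longlongrightarrow> C * (CARD('i) * CARD('j) * t * measure \<mu> K + 0 / (4 * t))) (at_right 0)"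
    by (intro tendsto_mult_left tendsto_add tendsto_const)
  moreover have "\<forall>\<^sub>F \<epsilon> in at_right 0. X \<le> C * (CARD('i) * CARD('j) * t * measure \<mu> K + ?F \<epsilon> / (4 * t))"
    using bound
  proof eventually_elim
    fix \<epsilon>
    assume "X \<le> C * (\<integral>x\<in>K. (\<Sum>i\<in>UNIV. \<Sum>j\<in>UNIV. \<bar>p \<epsilon> i j x\<bar>) \<partial>\<mu>)"
    also have "\<dots> \<le> C * (CARD('i) * CARD('j) * t * measure \<mu> K + ?F \<epsilon> / (4 * t))"
      by (rule mult_left_mono[OF set_integral_sum_abs_le[where q="p \<epsilon>", OF cont K t] C])
    finally show "X \<le> C * (CARD('i) * CARD('j) * t * measure \<mu> K + ?F \<epsilon> / (4 * t))" .
  qed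
  ultimately show "X \<le> c * t"
    by (intro tendsto_lowerbound) (auto simp: c_def mult_ac)
qed

text \<open>The radial estimate applied to \<open>s = smooth_step (|u|\<^sup>2 - \<delta>\<^sup>2)\<close>, a smooth cut-off that is at
  least \<open>smooth_step (\<delta>\<^sup>2)\<close> where \<open>|u|\<^sup>2 \<ge> 2\<delta>\<^sup>2\<close> and vanishes where \<open>|u| < \<delta>\<close>.\<close>

lemma measure_le_integral_pderiv:
  fixes u :: "'j::finite \<Rightarrow> real^'n \<Rightarrow> real" and \<delta> M C R :: real
  assumes u: "\<And>j. smooth_fun (u j)" and M: "\<And>j x. \<bar>u j x\<bar> \<le> M"
    and K: "compact K" "K \<subseteq> \<Omega>" and R: "\<And>x. x \<in> K \<Longrightarrow> norm x \<le> R" "0 \<le> R"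
    and outside: "\<And>x. x \<notin> K \<Longrightarrow> (\<Sum>j\<in>UNIV. (u j x)\<^sup>2) < \<delta>\<^sup>2"
    and inside: "\<And>x. x \<in> S \<Longrightarrow> 2 * \<delta>\<^sup>2 \<le> (\<Sum>j\<in>UNIV. (u j x)\<^sup>2)"
    and S: "S \<in> sets \<mu>" "S \<subseteq> K"
    and C: "\<And>t. - (\<delta>\<^sup>2) \<le> t \<Longrightarrow> t \<le> CARD('j) * M\<^sup>2 \<Longrightarrow> \<bar>deriv smooth_step t\<bar> \<le> C"
  shows "smooth_step (\<delta>\<^sup>2) * measure \<mu> S
    \<le> CARD('k) * R * (2 * C * M) * (\<integral>x\<in>K. (\<Sum>i\<in>UNIV. \<Sum>j\<in>UNIV. \<bar>pderiv_at i (u j) x\<bar>) \<partial>\<mu>)"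
proof -
  define Q where "Q x = (\<Sum>j\<in>UNIV. (u j x)\<^sup>2) - \<delta>\<^sup>2" for x
  define s where "s x = smooth_step (Q x)" for x
  have s_smooth: "smooth_fun s"
    unfolding s_def[abs_def] Q_def power2_eq_square diff_conv_add_uminus
    by (intro smooth_fun_compose_real[OF smooth_real_smooth_step] smooth_fun_add smooth_fun_sum
        smooth_fun_mult u smooth_fun_const) auto
  have s0: "s x = 0" if "x \<notin> K" for x
    using outside[OF that] by (simp add: s_def Q_def smooth_step_eq_0)
  have grad: "(\<Sum>i\<in>UNIV. \<bar>pderiv_at i s x\<bar>) \<le> 2 * C * M * (\<Sum>i\<in>UNIV. \<Sum>j\<in>UNIV. \<bar>pderiv_at i (u j) x\<bar>)" for x
    unfolding s_def[abs_def] Q_def using u M C by (rule sum_abs_pderiv_smooth_step_sum_squares_le)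
  have "smooth_step (\<delta>\<^sup>2) * measure \<mu> S \<le> integral\<^sup>L \<mu> s"
  proof -
    have "integral\<^sup>L \<mu> (\<lambda>x. smooth_step (\<delta>\<^sup>2) * indicator S x) \<le> integral\<^sup>L \<mu> s"
    proof (rule Bochner_Integration.integral_mono)
      show "integrable \<mu> (\<lambda>x. smooth_step (\<delta>\<^sup>2) * indicator S x)"
      proof (intro integrable_mult_right integrable_real_indicator)
        have "emeasure \<mu> S \<le> emeasure \<mu> K"
          using S K(1) by (intro emeasure_mono closed_in_sets compact_imp_closed)
        then show "emeasure \<mu> S < \<infinity>"
          using finite_on_compact[OF K(1)] by (simp add: top.not_eq_extremum le_less_trans)
      qed (use S in auto)
      have "integrable \<mu> (\<lambda>x. indicator K x * s x)"
        using K(1) s_smooth by (intro integrable_indicator_times_continuous smooth_fun_continuous_on)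
      moreover have "(\<lambda>x. indicator K x * s x) = s"
        using s0 by (intro ext) (metis indicator_simps mult_cancel_right1 mult_not_zero)
      ultimately show "integrable \<mu> s"
        by simp
      show "smooth_step (\<delta>\<^sup>2) * indicator S x \<le> s x" for x
        using inside[of x] by (cases "x \<in> S")
          (auto simp: s_def Q_def indicator_def smooth_step_nonneg intro!: smooth_step_mono)
    qed
    then show ?thesis
      by (simp add: space_eq_UNIV)
  qed
  also have "\<dots> \<le> CARD('k) * R * (\<integral>x\<in>K. (\<Sum>i\<in>UNIV. \<bar>pderiv_at i s x\<bar>) \<partial>\<mu>)"
    using s_smooth K s0 R(1) by (rule stationary_radial_bound)
  also have "\<dots> \<le> CARD('k) * R * (\<integral>x\<in>K. 2 * C * M * (\<Sum>i\<in>UNIV. \<Sum>j\<in>UNIV. \<bar>pderiv_at i (u j) x\<bar>) \<partial>\<mu>)"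
  proof (rule mult_left_mono)
    show "(\<integral>x\<in>K. (\<Sum>i\<in>UNIV. \<bar>pderiv_at i s x\<bar>) \<partial>\<mu>)
        \<le> (\<integral>x\<in>K. 2 * C * M * (\<Sum>i\<in>UNIV. \<Sum>j\<in>UNIV. \<bar>pderiv_at i (u j) x\<bar>) \<partial>\<mu>)"
    proof (rule set_integral_mono)
      show "set_integrable \<mu> K (\<lambda>x. \<Sum>i\<in>UNIV. \<bar>pderiv_at i s x\<bar>)"
        using s_smooth K(1) by (intro set_integrable_continuous continuous_intros
            smooth_fun_continuous_on smooth_fun_pderiv_at)
      show "set_integrable \<mu> K (\<lambda>x. 2 * C * M * (\<Sum>i\<in>UNIV. \<Sum>j\<in>UNIV. \<bar>pderiv_at i (u j) x\<bar>))"
        using u K(1) by (intro set_integrable_continuous continuous_intros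
            smooth_fun_continuous_on smooth_fun_pderiv_at)
    qed (rule grad)
    show "0 \<le> CARD('k) * R"
      using R(2) by simp
  qed
  finally show ?thesis
    by (simp add: set_integral_mult_right mult_ac)
qed

lemma measure_le_mollified_gradient:
  fixes w :: "real^'n \<Rightarrow> real^'j::finite" and \<delta> \<epsilon> L R W C :: real
  assumes lip: "L-lipschitz_on UNIV w" and box: "\<Omega> \<subseteq> cbox a b" and wz: "\<And>x. x \<notin> \<Omega> \<Longrightarrow> w x = 0"
    and R: "\<And>x. x \<in> \<Omega> \<Longrightarrow> norm x \<le> R" "0 \<le> R" and W: "\<And>x. norm (w x) \<le> W"
    and \<delta>: "\<delta> > 0" and K: "compact K" "K \<subseteq> \<Omega>" "K = {y. \<delta> / 2 \<le> norm (w y)}"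
    and S: "S \<in> sets \<mu>" "S \<subseteq> K" "\<And>y. y \<in> S \<Longrightarrow> 2 * \<delta> \<le> norm (w y)"
    and C: "\<And>t. - (\<delta>\<^sup>2) \<le> t \<Longrightarrow> t \<le> CARD('j) * (W + 1)\<^sup>2 \<Longrightarrow> \<bar>deriv smooth_step t\<bar> \<le> C"
    and \<epsilon>: "\<epsilon> > 0" "L * \<epsilon> \<le> 1" "CARD('j) * (L * \<epsilon>) \<le> \<delta> / 4"
  shows "smooth_step (\<delta>\<^sup>2) * measure \<mu> S \<le> CARD('k) * R * (2 * C * (W + 1)) *
    (\<integral>x\<in>K. (\<Sum>i\<in>UNIV. \<Sum>j\<in>UNIV. \<bar>pderiv_at i (box_conv a b (mollifier \<epsilon>) (\<lambda>y. w y $ j)) x\<bar>) \<partial>\<mu>)"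
proof (rule measure_le_integral_pderiv[OF _ _ K(1,2) _ R(2) _ _ S(1,2) C])
  let ?u = "\<lambda>j. box_conv a b (mollifier \<epsilon>) (\<lambda>y. w y $ j)"
  have wz': "\<And>y. y \<notin> cbox a b \<Longrightarrow> w y = 0"
    using box wz by blast
  have close: "\<bar>(\<chi> j. ?u j x) $ j - w x $ j\<bar> \<le> L * \<epsilon>" for j x
    using box_conv_mollifier_lipschitz_approx[OF \<epsilon>(1) lip wz'] by simp
  show "smooth_fun (?u j)" for j
    using lipschitz_on_continuous_on[OF lip] by (rule smooth_fun_box_conv_mollifier_component)
  show "\<bar>?u j x\<bar> \<le> W + 1" for j x
    using close[where j=j and x=x] component_le_norm_cart[of "w x" j] W[of x] \<epsilon>(2) by simp
  show "norm x \<le> R" if "x \<in> K" for x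
    using R(1) K(2) that by blast
  show "(\<Sum>j\<in>UNIV. (?u j x)\<^sup>2) < \<delta>\<^sup>2" if "x \<notin> K" for x
    using sum_squares_bounds_if_close(1)[OF close \<epsilon>(3) \<delta>] that K(3) by simp
  show "2 * \<delta>\<^sup>2 \<le> (\<Sum>j\<in>UNIV. (?u j x)\<^sup>2)" if "x \<in> S" for x
    using sum_squares_bounds_if_close(2)[OF close \<epsilon>(3) \<delta> S(3)[OF that]] by simp
qed

lemma emeasure_nonvanishing_eq_0:
  fixes w :: "real^'n \<Rightarrow> real^'j::finite" and Dw :: "real^'n \<Rightarrow> real^'n^'j" and L :: real
  assumes bounded: "bounded \<Omega>" and lip: "L-lipschitz_on UNIV w" and wz: "\<And>x. x \<notin> \<Omega> \<Longrightarrow> w x = 0"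
    and Dw: "weak_deriv_on \<Omega> w Dw" and rep0: "is_local_L2_rep \<mu> \<Omega> Dw (\<lambda>x. 0)"
    and S: "compact S" and Sw: "\<And>y. y \<in> S \<Longrightarrow> w y \<noteq> 0"
  shows "emeasure \<mu> S = 0"
proof (cases "S = {}")
  case False
  have wc: "continuous_on UNIV w"
    using lip by (rule lipschitz_on_continuous_on)
  have wnc: "continuous_on UNIV (\<lambda>y. norm (w y))"
    by (intro continuous_intros wc)
  obtain a where box: "\<Omega> \<subseteq> cbox (-a) a"
    using bounded_subset_cbox_symmetric[OF bounded] by blast
  obtain R where R: "R > 0" "\<And>x. x \<in> \<Omega> \<Longrightarrow> norm x \<le> R"
    using bounded by (auto simp: bounded_pos)
  obtain W where W: "\<And>x. norm (w x) \<le> W"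
    using bounded_range_compact_support[OF wc compact_cbox, of "-a" a] wz box by blast
  obtain x0 where x0: "x0 \<in> S" "\<And>y. y \<in> S \<Longrightarrow> norm (w x0) \<le> norm (w y)"
    using continuous_attains_inf[OF S False continuous_on_subset[OF wnc]] by auto
  define \<delta> where "\<delta> = norm (w x0) / 2"
  have \<delta>: "\<delta> > 0"
    using Sw[OF x0(1)] by (simp add: \<delta>_def)
  define K where "K = {y. \<delta> / 2 \<le> norm (w y)}"
  have "\<delta> / 2 > 0"
    using \<delta> by simp
  note superlevel = compact_superlevel_set[OF bounded wc wz this]
  have KO: "K \<subseteq> \<Omega>"
    unfolding K_def by (rule superlevel(1))
  have K: "compact K"
    unfolding K_def by (rule superlevel(2))
  obtain d where "d > 0" "(\<Union>x\<in>K. cball x d) \<subseteq> \<Omega>"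
    using compact_subset_open_imp_cball_epsilon_subset[OF K open_domain KO] by blast
  then have d: "d > 0" "\<And>x. x \<in> K \<Longrightarrow> cball x d \<subseteq> \<Omega>"
    by auto
  obtain C where C: "\<And>t. - (\<delta>\<^sup>2) \<le> t \<Longrightarrow> t \<le> CARD('j) * (W + 1)\<^sup>2 \<Longrightarrow> \<bar>deriv smooth_step t\<bar> \<le> C"
    using bounded_deriv_smooth_step_Icc by blast
  have C0: "C \<ge> 0"
    using C[of 0] by (smt (verit) of_nat_0_le_iff zero_le_power2 mult_nonneg_nonneg)
  have S_big: "2 * \<delta> \<le> norm (w y)" if "y \<in> S" for y
    using x0(2)[OF that] by (simp add: \<delta>_def)
  then have S_sub: "S \<subseteq> K"
    using \<delta> by (force simp: K_def)
  have "\<delta> / 4 > 0"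
    using \<delta> by simp
  have small: "\<forall>\<^sub>F \<epsilon> in at_right 0. 0 < \<epsilon> \<and> L * \<epsilon> \<le> 1 \<and> CARD('j) * (L * \<epsilon>) \<le> \<delta> / 4"
    using eventually_at_right_less[of 0] eventually_mult_less_at_right_0[OF zero_less_one, of L]
      eventually_mult_less_at_right_0[OF \<open>\<delta> / 4 > 0\<close>, of "CARD('j) * L"]
    by eventually_elim (auto simp: mult.assoc)
  have "smooth_step (\<delta>\<^sup>2) * measure \<mu> S \<le> 0"
  proof (rule nonpos_if_le_L1_of_L2_tendsto_0[OF _ K])
    show "\<forall>\<^sub>F \<epsilon> in at_right 0. smooth_step (\<delta>\<^sup>2) * measure \<mu> S \<le> CARD('k) * R * (2 * C * (W + 1)) *
      (\<integral>x\<in>K. (\<Sum>i\<in>UNIV. \<Sum>j\<in>UNIV. \<bar>pderiv_at i (box_conv (-a) a (mollifier \<epsilon>) (\<lambda>y. w y $ j)) x\<bar>) \<partial>\<mu>)"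
      using small
    proof eventually_elim
      fix \<epsilon>
      assume "0 < \<epsilon> \<and> L * \<epsilon> \<le> 1 \<and> CARD('j) * (L * \<epsilon>) \<le> \<delta> / 4"
      with S_sub S_big R C0 closed_in_sets[OF compact_imp_closed[OF S]]
      show "smooth_step (\<delta>\<^sup>2) * measure \<mu> S \<le> CARD('k) * R * (2 * C * (W + 1)) *
          (\<integral>x\<in>K. (\<Sum>i\<in>UNIV. \<Sum>j\<in>UNIV. \<bar>pderiv_at i (box_conv (-a) a (mollifier \<epsilon>) (\<lambda>y. w y $ j)) x\<bar>) \<partial>\<mu>)"
        by (intro measure_le_mollified_gradient[OF lip box wz _ _ W \<delta> K KO K_def]) (auto intro: C)
    qed
    show "((\<lambda>\<epsilon>. \<integral>x\<in>K. (\<Sum>i\<in>UNIV. \<Sum>j\<in>UNIV.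
        (pderiv_at i (box_conv (-a) a (mollifier \<epsilon>) (\<lambda>y. w y $ j)) x)\<^sup>2) \<partial>\<mu>) \<longlongrightarrow> 0) (at_right 0)"
      using Dw rep0 K d box wc wz by (rule pderiv_box_conv_mollifier_L2_tendsto_0)
    show "0 \<le> CARD('k) * R * (2 * C * (W + 1))"
      using R(1) C0 order_trans[OF norm_ge_zero W] by (intro mult_nonneg_nonneg) auto
    show "continuous_on UNIV (pderiv_at i (box_conv (-a) a (mollifier \<epsilon>) (\<lambda>y. w y $ j)))" for \<epsilon> i j
      by (rule smooth_fun_continuous_on[OF smooth_fun_pderiv_at[OF smooth_fun_box_conv_mollifier_component[OF wc]]])
  qed
  then have "measure \<mu> S = 0"
    using smooth_step_pos_iff[of "\<delta>\<^sup>2"] \<delta> measure_nonneg[of \<mu> S] by (simp add: mult_le_0_iff)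
  then show ?thesis
    using finite_on_compact[OF S] by (simp add: emeasure_eq_ennreal_measure)
qed simp

end

section \<open>Vanishing on the support\<close>

lemma current_supp_disjoint_null_open:
  assumes repr: "joint_mass_repr T \<mu> V" and U: "open U"
    and null: "\<And>S. compact S \<Longrightarrow> S \<subseteq> U \<Longrightarrow> emeasure \<mu> S = 0"
  shows "current_supp T \<inter> U = {}"
proof -
  have "T k \<omega> = 0" if \<omega>: "test_fun_on U \<omega>" for k \<omega>
  proof -
    have "tsupp \<omega> \<in> null_sets \<mu>"
      using \<omega> null repr borel_closed
      by (auto simp: null_sets_def test_fun_on_def joint_mass_repr_def tsupp_def)
    then have "AE y in \<mu>. \<omega> y \<bullet> V k y = 0"
      by (rule AE_I') (auto simp: tsupp_def intro: closure_subset[THEN subsetD])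
    then have "(\<integral>y. \<omega> y \<bullet> V k y \<partial>\<mu>) = 0"
      by (rule integral_eq_zero_AE)
    with \<omega> repr show ?thesis
      by (simp add: test_fun_on_def joint_mass_repr_def)
  qed
  with U show ?thesis
    unfolding current_supp_def by blast
qed

theorem mainTheorem7:
  fixes \<Omega> :: "(real^'n::finite) set"
    and T :: "'k::finite \<Rightarrow> (real^'n \<Rightarrow> real^'n) \<Rightarrow> real"
    and \<mu> :: "(real^'n) measure"
    and V :: "'k \<Rightarrow> real^'n \<Rightarrow> real^'n"
    and w :: "real^'n \<Rightarrow> real^'k"
    and Dw :: "real^'n \<Rightarrow> real^'n^'k"
  assumes dom: "bounded_smooth_domain \<Omega>"
    and mass: "loc_finite_joint_mass T"
    and repr: "joint_mass_repr T \<mu> V"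
    and stat: "\<forall>\<psi>::real^'n \<Rightarrow> real^'n. test_fun_on \<Omega> \<psi> \<longrightarrow>
                 (\<Sum>k\<in>UNIV. (\<integral>x\<in>\<Omega>. V k x \<bullet> frechet_derivative \<psi> (at x) (V k x) \<partial>\<mu>)) = 0"
    and w_lip: "\<exists>C. C-lipschitz_on UNIV w"
    and w_zero: "\<forall>x. x \<notin> \<Omega> \<longrightarrow> w x = 0"
    and Dw: "weak_deriv_on \<Omega> w Dw"
    and rep0: "is_local_L2_rep \<mu> \<Omega> Dw (\<lambda>x. 0)"
  shows "\<forall>x\<in>current_supp T. w x = 0"
proof -
  \<comment> \<open>\<open>mass\<close> only guarantees that the representation \<open>repr\<close> exists, which is assumed anyway;
    of \<open>dom\<close> only openness and boundedness are used.\<close>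
  have "open \<Omega>" "bounded \<Omega>"
    using dom by (auto simp: bounded_smooth_domain_def)
  then interpret stationary_mass \<Omega> \<mu> V
    using repr stat by unfold_locales (auto simp: joint_mass_repr_def)
  obtain L where lip: "L-lipschitz_on UNIV w"
    using w_lip by blast
  have "open {y. w y \<noteq> 0}"
    using lipschitz_on_continuous_on[OF lip] by (intro open_Collect_neq continuous_on_const)
  moreover have "emeasure \<mu> S = 0" if "compact S" "S \<subseteq> {y. w y \<noteq> 0}" for S
    using \<open>bounded \<Omega>\<close> lip w_zero Dw rep0 that by (intro emeasure_nonvanishing_eq_0) auto
  ultimately have "current_supp T \<inter> {y. w y \<noteq> 0} = {}"
    by (rule current_supp_disjoint_null_open[OF repr])
  then show ?thesis
    by blast
qed

end
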